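(* Assume conditions (i) and (ii) of the context. There exists a polynomial $h_2:\mathbb R^5\to\mathbb R$ such that for all $d\in\mathbb N$, every architecture $a$ with input dimension $d$, all $R\in(0,\infty)$, $K,D\in[1,\infty)$, $\varepsilon,\varrho\in(0,1)$ and every $m\in\mathbb N$ with $$m\ge K^{5\lambda}h_2\big(\varepsilon^{-1},P(a),\log R,\log(\varrho^{-1}),D\big),$$ it holds with $\mathcal H=\mathcal N_{a,R,D}$ that $$\mathbb P\Big(\sup_{f\in\mathcal H}\big|\mathcal E_d^{(K)}(f)-\mathcal E_{d,m}^{(K)}(f)\big|\le\varepsilon\Big)\ge1-\varrho.$$
   Context: Fix $T\in(0,\infty)$ and reals $u<v$. For each $d\in\mathbb N$: $\mu_d,\sigma_d$ Lipschitz, $\varphi_d:\mathbb R^d\to\mathbb R$ measurable; on a filtered probability space $(\Omega,\mathcal F,\mathbb P)$, $B$ a standard $d$-dimensional Brownian motion, $X_d$ uniform on $[u,v]^d$ and $\mathcal F_0$-measurable, $S_t=X_d+\int_0^t\mu_d(S_s)ds+\int_0^t\sigma_d(S_s)dB_s$, $Y_d=S_T=(Y_{d,1},\dots,Y_{d,d})$. Let $(\mathbf x_i,\mathbf y_i)_{i\ge1}$ be i.i.d. copies of $(X_d,Y_d)$. Truncation: $\varphi_d^{(K)}(x)=\mathbf 1\{\|x\|_\infty\le K\}\varphi_d(x)$, $\mathcal E_d^{(K)}(f)=\mathbb E[(f(X_d)-\varphi_d^{(K)}(Y_d))^2]$, $\mathcal E_{d,m}^{(K)}(f)=\frac1m\sum_{i=1}^m(f(\mathbf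 x_i)-\varphi_d^{(K)}(\mathbf y_i))^2$. Conditions: (i) there is $c_1\in(0,\infty)$ with $\mathbb P(|Y_{d,i}|\ge t)\le2\exp\{-c_1(\log t)^2\}$ for all $d$, $t\ge1$, $i\le d$; (ii) there are $c_2\in(0,\infty)$, $\lambda\in[2,\infty)$ with $|\varphi_d(y)|\le c_2(1+\|y\|_2^\lambda)$ for all $d$, $y$. ReLU networks: architecture $a=(N_0,\dots,N_L)$ with $N_0=d$, $N_L=1$; parameters $\theta=((A_l,b_l))_{l=1}^L$, $A_l\in\mathbb R^{N_l\times N_{l-1}}$, $b_l\in\mathbb R^{N_l}$; $\Phi_\theta=W_L\circ\rho\circ\cdots\circ\rho\circ W_1$, $W_l(x)=A_lx+b_l$, $\rho$ componentwise ReLU; $\|\theta\|_\infty$ maximal absolute entry; $P(a)=\sum_l N_l(N_{l-1}+1)$; $\mathcal N_{a,R}=\{\Phi_\theta|_{[u,v]^d}:\|\theta\|_\infty\le R\}$; $\mathrm{Clip}_D(x)=\min\{|x|,D\}\operatorname{sgn}(x)$; $\mathcal N_{a,R,D}=\{\mathrm{Clip}_D\circ\Phi:\Phi\in\mathcal N_{a,R}\}$. *)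

theory Defs
  imports "HOL-Probability.Probability"
begin

text \<open>Vectors in R^d are represented as functions nat \<Rightarrow> real, only the
coordinates 0..d-1 being relevant (elements of the product measure space
PiM {..<d} are extensional, i.e. undefined outside {..<d}).\<close>

definition vec_space :: "nat \<Rightarrow> (nat \<Rightarrow> real) measure" where
  "vec_space d = PiM {..<d} (\<lambda>_. (borel :: real measure))"

definition unif_cube :: "real \<Rightarrow> real \<Rightarrow> nat \<Rightarrow> (nat \<Rightarrow> real) measure" where
  "unif_cube u v d = PiM {..<d} (\<lambda>_. uniform_measure lborel {u..v})"

definition cube :: "real \<Rightarrow> real \<Rightarrow> nat \<Rightarrow> (nat \<Rightarrow> real) set" where
  "cube u v d = {x. \<forall>i<d. x i \<in> {u..v}}"

definition norm_inf :: "nat \<Rightarrow> (nat \<Rightarrow> real) \<Rightarrow> real" where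
  "norm_inf d y = (MAX i\<in>{..<d}. \<bar>y i\<bar>)"

definition norm2 :: "nat \<Rightarrow> (nat \<Rightarrow> real) \<Rightarrow> real" where
  "norm2 d y = sqrt (\<Sum>i<d. (y i)\<^sup>2)"

definition poly5 :: "(real \<Rightarrow> real \<Rightarrow> real \<Rightarrow> real \<Rightarrow> real \<Rightarrow> real) \<Rightarrow> bool" where
  "poly5 h \<longleftrightarrow> (\<exists>(N::nat) (c :: nat \<Rightarrow> nat \<Rightarrow> nat \<Rightarrow> nat \<Rightarrow> nat \<Rightarrow> real).
     \<forall>x1 x2 x3 x4 x5. h x1 x2 x3 x4 x5 =
       (\<Sum>i1\<le>N. \<Sum>i2\<le>N. \<Sum>i3\<le>N. \<Sum>i4\<le>N. \<Sum>i5\<le>N.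
          c i1 i2 i3 i4 i5 * x1 ^ i1 * x2 ^ i2 * x3 ^ i3 * x4 ^ i4 * x5 ^ i5))"

text \<open>ReLU networks. An architecture is a list [N_0,...,N_L];
parameters are a list [(A_1,b_1),...,(A_L,b_L)], A_l j k is the (j,k) entry.\<close>

type_synonym params = "((nat \<Rightarrow> nat \<Rightarrow> real) \<times> (nat \<Rightarrow> real)) list"

definition affine :: "nat \<Rightarrow> nat \<Rightarrow> (nat \<Rightarrow> nat \<Rightarrow> real) \<Rightarrow> (nat \<Rightarrow> real) \<Rightarrow> (nat \<Rightarrow> real) \<Rightarrow> (nat \<Rightarrow> real)" where
  "affine nin nout A b x = (\<lambda>j. if j < nout then (\<Sum>k<nin. A j k * x k) + b j else 0)"

definition relu_vec :: "(nat \<Rightarrow> real) \<Rightarrow> (nat \<Rightarrow> real)" where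
  "relu_vec x = (\<lambda>j. max 0 (x j))"

fun net_eval :: "nat list \<Rightarrow> params \<Rightarrow> (nat \<Rightarrow> real) \<Rightarrow> (nat \<Rightarrow> real)" where
  "net_eval (n0 # n1 # ns) ((A, b) # ps) x =
     (let y = affine n0 n1 A b x in if ns = [] then y else net_eval (n1 # ns) ps (relu_vec y))"
| "net_eval _ _ x = x"

text \<open>Realization Phi_theta : R^{N_0} \<rightarrow> R (output dimension N_L = 1).\<close>
definition realization :: "nat list \<Rightarrow> params \<Rightarrow> (nat \<Rightarrow> real) \<Rightarrow> real" where
  "realization a \<theta> x = net_eval a \<theta> x 0"

definition is_arch :: "nat \<Rightarrow> nat list \<Rightarrow> bool" where
  "is_arch d a \<longleftrightarrow> length a \<ge> 2 \<and> hd a = d \<and> last a = 1 \<and> (\<forall>l<length a. a ! l \<ge> 1)"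

definition param_count :: "nat list \<Rightarrow> nat" where
  "param_count a = (\<Sum>l\<in>{1..<length a}. a ! l * (a ! (l - 1) + 1))"

definition param_bounded :: "nat list \<Rightarrow> real \<Rightarrow> params \<Rightarrow> bool" where
  "param_bounded a R \<theta> \<longleftrightarrow> length \<theta> = length a - 1 \<and>
     (\<forall>l<length \<theta>. (\<forall>j<a ! (l + 1). \<bar>snd (\<theta> ! l) j\<bar> \<le> R \<and>
        (\<forall>k<a ! l. \<bar>fst (\<theta> ! l) j k\<bar> \<le> R)))"

definition clip :: "real \<Rightarrow> real \<Rightarrow> real" where
  "clip D x = min \<bar>x\<bar> D * sgn x"

text \<open>N_{a,R,D}: clipped network realizations restricted to [u,v]^d
(values outside the cube set to 0; they are never used).\<close>
definition NN_class :: "real \<Rightarrow> real \<Rightarrow> nat list \<Rightarrow> real \<Rightarrow> real \<Rightarrow> ((nat \<Rightarrow> real) \<Rightarrow> real) set" where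
  "NN_class u v a R D = {(\<lambda>x. if x \<in> cube u v (hd a) then clip D (realization a \<theta> x) else 0) | \<theta>. param_bounded a R \<theta>}"

definition trunc :: "nat \<Rightarrow> real \<Rightarrow> ((nat \<Rightarrow> real) \<Rightarrow> real) \<Rightarrow> (nat \<Rightarrow> real) \<Rightarrow> real" where
  "trunc d K \<phi> y = (if norm_inf d y \<le> K then \<phi> y else 0)"

end

theory Submission
  imports Defs
begin

(*
  A realization of the network is Lipschitz in its parameters, uniformly on the cube [u,v]^d,
  with constant P (r + 1) (2 max(1,R) P)^P where P = P(a) and r = max(|u|,|v|): every layer
  multiplies input bounds and parameter errors by at most 2 max(1,R) G, with G one more than
  the widest layer, and there are at most P layers. Hence every network in N_{a,R,D} is
  approximated to within delta times this constant by one of the at most (2R/delta + 1)^P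
  networks whose parameters lie on the grid of mesh delta in [-R,R].

  Truncation at K bounds the target by B = c2 (1 + (dK)^lambda) by condition (ii), so the
  squared loss takes values in [0, (D + B)^2], and Hoeffding's inequality controls the
  generalization gap of each grid network. A union bound over the grid, with delta chosen such
  that moving to the nearest grid point changes the gap by at most eps/2, bounds the failure
  probability by 2 (2R/delta + 1)^P exp(-m eps^2 / (2 (D + B)^4)). Taking logarithms, this is
  at most rho once m exceeds K^(5 lambda) times a polynomial in 1/eps, P, ln R, ln(1/rho) and D.
*)

section \<open>Perturbation of ReLU networks in their parameters\<close>

definition params_close :: "nat list \<Rightarrow> real \<Rightarrow> params \<Rightarrow> params \<Rightarrow> bool" where
  "params_close a \<delta> \<theta> \<theta>' \<longleftrightarrow> length \<theta> = length \<theta>' \<and>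
     (\<forall>l<length \<theta>. (\<forall>j<a ! (l + 1). \<bar>snd (\<theta> ! l) j - snd (\<theta>' ! l) j\<bar> \<le> \<delta> \<and>
        (\<forall>k<a ! l. \<bar>fst (\<theta> ! l) j k - fst (\<theta>' ! l) j k\<bar> \<le> \<delta>)))"

lemma param_bounded_Cons:
  "param_bounded (n0 # n1 # ns) R ((A, b) # ps) \<longleftrightarrow>
    (\<forall>j<n1. \<bar>b j\<bar> \<le> R \<and> (\<forall>k<n0. \<bar>A j k\<bar> \<le> R)) \<and> param_bounded (n1 # ns) R ps"
  unfolding param_bounded_def by (simp only: length_Cons All_less_Suc2) auto

lemma params_close_Cons:
  "params_close (n0 # n1 # ns) \<delta> ((A, b) # ps) ((A', b') # ps') \<longleftrightarrow>
    (\<forall>j<n1. \<bar>b j - b' j\<bar> \<le> \<delta> \<and> (\<forall>k<n0. \<bar>A j k - A' j k\<bar> \<le> \<delta>)) \<and> params_close (n1 # ns) \<delta> ps ps'"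
  unfolding params_close_def by (simp only: length_Cons All_less_Suc2) auto

lemma param_bounded_mono: "param_bounded a R \<theta> \<Longrightarrow> R \<le> R' \<Longrightarrow> param_bounded a R' \<theta>"
  unfolding param_bounded_def by force

lemma affine_abs_le:
  assumes "\<forall>j<n1. \<bar>b j\<bar> \<le> R \<and> (\<forall>k<n0. \<bar>A j k\<bar> \<le> R)" "\<forall>k<n0. \<bar>x k\<bar> \<le> r" "0 \<le> r" "0 \<le> R"
  shows "\<bar>affine n0 n1 A b x j\<bar> \<le> R * (real n0 * r + 1)"
proof (cases "j < n1")
  case True
  have "\<bar>(\<Sum>k<n0. A j k * x k) + b j\<bar> \<le> (\<Sum>k<n0. \<bar>A j k\<bar> * \<bar>x k\<bar>) + \<bar>b j\<bar>"
    using sum_abs[of "\<lambda>k. A j k * x k" "{..<n0}"] abs_triangle_ineq[of "\<Sum>k<n0. A j k * x k" "b j"]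
    by (simp add: abs_mult)
  also have "\<dots> \<le> (\<Sum>k<n0. R * r) + R"
    using assms True by (intro add_mono sum_mono mult_mono) auto
  finally show ?thesis using True by (simp add: affine_def algebra_simps)
qed (use assms in \<open>simp add: affine_def\<close>)

lemma affine_diff_abs_le:
  assumes "\<forall>j<n1. \<bar>b j\<bar> \<le> R \<and> (\<forall>k<n0. \<bar>A j k\<bar> \<le> R)"
    "\<forall>j<n1. \<bar>b j - b' j\<bar> \<le> \<delta> \<and> (\<forall>k<n0. \<bar>A j k - A' j k\<bar> \<le> \<delta>)"
    "\<forall>k<n0. \<bar>x' k\<bar> \<le> r \<and> \<bar>x k - x' k\<bar> \<le> e" "0 \<le> r" "0 \<le> e" "0 \<le> \<delta>" "0 \<le> R"
  shows "\<bar>affine n0 n1 A b x j - affine n0 n1 A' b' x' j\<bar> \<le> real n0 * (R * e + \<delta> * r) + \<delta>"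
proof (cases "j < n1")
  case True
  have split: "A j k * x k - A' j k * x' k = A j k * (x k - x' k) + (A j k - A' j k) * x' k" for k
    by (simp add: algebra_simps)
  have "\<bar>(\<Sum>k<n0. A j k * x k - A' j k * x' k) + (b j - b' j)\<bar>
      \<le> (\<Sum>k<n0. \<bar>A j k\<bar> * \<bar>x k - x' k\<bar> + \<bar>A j k - A' j k\<bar> * \<bar>x' k\<bar>) + \<bar>b j - b' j\<bar>"
  proof -
    have "\<bar>A j k * x k - A' j k * x' k\<bar> \<le> \<bar>A j k\<bar> * \<bar>x k - x' k\<bar> + \<bar>A j k - A' j k\<bar> * \<bar>x' k\<bar>" for k
      unfolding split abs_mult[symmetric] by (rule abs_triangle_ineq)
    then have "\<bar>\<Sum>k<n0. A j k * x k - A' j k * x' k\<bar>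
        \<le> (\<Sum>k<n0. \<bar>A j k\<bar> * \<bar>x k - x' k\<bar> + \<bar>A j k - A' j k\<bar> * \<bar>x' k\<bar>)"
      by (intro order_trans[OF sum_abs] sum_mono)
    then show ?thesis using abs_triangle_ineq by (smt (verit))
  qed
  also have "\<dots> \<le> (\<Sum>k<n0. R * e + \<delta> * r) + \<delta>"
    using assms True by (intro add_mono sum_mono mult_mono) auto
  finally show ?thesis
    using True by (simp add: affine_def sum_subtractf algebra_simps)
qed (use assms in \<open>simp add: affine_def\<close>)

lemma layer_growth:
  fixes R G r e \<delta> :: real
  assumes "real n0 + 1 \<le> G" "1 \<le> R" "0 \<le> r" "0 \<le> e" "0 \<le> \<delta>"
  shows "R * (real n0 * r + 1) \<le> 2 * R * G * (r + 1) - 1"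
    and "real n0 * (R * e + \<delta> * r) + \<delta> \<le> 2 * R * G * (e + \<delta> * (r + 1))"
proof -
  have G: "1 \<le> G" "real n0 \<le> G" using assms by simp_all
  then have RG: "1 \<le> R * G" "R \<le> R * G" using assms mult_mono[of 1 R 1 G] by auto
  have "R * real n0 * r \<le> R * G * r" "0 \<le> R * G * r"
    using assms G by (auto intro: mult_right_mono mult_left_mono)
  then show "R * (real n0 * r + 1) \<le> 2 * R * G * (r + 1) - 1"
    using RG by (simp add: algebra_simps)
  have "real n0 * (R * e + \<delta> * r) + \<delta> \<le> G * (R * e + \<delta> * r) + R * G * \<delta>"
    using assms G mult_right_mono[OF RG(1) assms(5)] by (intro add_mono mult_right_mono) auto
  also have "\<dots> \<le> R * G * e + R * G * \<delta> * r + R * G * \<delta>"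
    using assms G mult_right_mono[of 1 R "G * \<delta> * r"] by (simp add: algebra_simps)
  also have "\<dots> \<le> 2 * R * G * (e + \<delta> * (r + 1))"
    using assms G by (simp add: algebra_simps)
  finally show "real n0 * (R * e + \<delta> * r) + \<delta> \<le> 2 * R * G * (e + \<delta> * (r + 1))" .
qed

lemma net_eval_diff_abs_le:
  assumes "param_bounded ns R \<theta>" "param_bounded ns R \<theta>'" "params_close ns \<delta> \<theta> \<theta>'" "2 \<le> length ns"
    "\<forall>n\<in>set ns. real n + 1 \<le> G" "\<forall>k<hd ns. \<bar>x' k\<bar> \<le> r \<and> \<bar>x k - x' k\<bar> \<le> e"
    "0 \<le> r" "0 \<le> e" "0 \<le> \<delta>" "1 \<le> R"
  shows "\<bar>net_eval ns \<theta> x j - net_eval ns \<theta>' x' j\<bar>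
     \<le> (2 * R * G) ^ (length ns - 1) * (e + real (length ns - 1) * \<delta> * (r + 1))"
  using assms
proof (induction \<theta> arbitrary: ns \<theta>' x x' r e j)
  case Nil
  then show ?case by (simp add: param_bounded_def)
next
  case (Cons p ps)
  from Cons.prems(4) obtain n0 n1 rest where ns: "ns = n0 # n1 # rest"
    by (auto simp: numeral_2_eq_2 Suc_le_length_iff)
  obtain A b A' b' ps' where \<theta>s: "p = (A, b)" "\<theta>' = (A', b') # ps'"
    using Cons.prems(1,2) by (cases p, cases \<theta>') (auto simp: param_bounded_def)
  note hyps = Cons.prems[unfolded ns \<theta>s param_bounded_Cons params_close_Cons]
  define y where "y = affine n0 n1 A b x"
  define y' where "y' = affine n0 n1 A' b' x'"
  have y': "\<bar>y' i\<bar> \<le> 2 * R * G * (r + 1) - 1" for i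
    using affine_abs_le[of n1 b' R n0 A' x' r i] layer_growth(1)[of n0 G R r 0 0] hyps
    unfolding y'_def by force
  have yy': "\<bar>y i - y' i\<bar> \<le> 2 * R * G * (e + \<delta> * (r + 1))" for i
    using affine_diff_abs_le[of n1 b R n0 A b' \<delta> A' x' r x e i] layer_growth(2)[of n0 G R r e \<delta>] hyps
    unfolding y_def y'_def by force
  show ?case
  proof (cases "rest = []")
    case True
    then show ?thesis using yy'[of j] by (simp add: ns \<theta>s y_def y'_def)
  next
    case False
    (* r1 + 1 = 2 R G (r + 1), so the bounds of the remaining layers telescope. *)
    define r1 where "r1 = 2 * R * G * (r + 1) - 1"
    define e1 where "e1 = 2 * R * G * (e + \<delta> * (r + 1))"
    have "\<bar>relu_vec y' k\<bar> \<le> r1 \<and> \<bar>relu_vec y k - relu_vec y' k\<bar> \<le> e1" for k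
      using y'[of k] yy'[of k] unfolding relu_vec_def r1_def e1_def by linarith
    moreover have "0 \<le> r1" "0 \<le> e1" using y'[of 0] yy'[of 0] unfolding r1_def e1_def by linarith+
    ultimately have "\<bar>net_eval (n1 # rest) ps (relu_vec y) j - net_eval (n1 # rest) ps' (relu_vec y') j\<bar>
      \<le> (2 * R * G) ^ length rest * (e1 + real (length rest) * \<delta> * (r1 + 1))"
      using Cons.IH[of "n1 # rest" ps' "relu_vec y'" r1 "relu_vec y" e1 j] hyps False by (auto simp: Suc_le_eq)
    then show ?thesis
      using False by (simp add: ns \<theta>s y_def y'_def r1_def e1_def algebra_simps)
  qed
qed

lemma param_count_Cons: "param_count (n0 # n1 # ns) = n1 * (n0 + 1) + param_count (n1 # ns)"
proof -
  have "param_count (n0 # n1 # ns)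
      = n1 * (n0 + 1) + (\<Sum>l\<in>{Suc 1..<Suc (Suc (length ns))}. (n0 # n1 # ns) ! l * ((n0 # n1 # ns) ! (l - 1) + 1))"
    by (simp add: param_count_def sum.atLeast_Suc_lessThan)
  also have "\<dots> = n1 * (n0 + 1) + param_count (n1 # ns)"
    unfolding sum.shift_bounds_Suc_ivl param_count_def by (simp add: nth_Cons')
  finally show ?thesis .
qed

lemma param_count_bounds:
  assumes "2 \<le> length ns" "\<forall>n\<in>set ns. 1 \<le> n"
  shows "\<forall>n\<in>set ns. n + 1 \<le> param_count ns" "length ns - 1 \<le> param_count ns"
proof -
  have "(\<forall>n\<in>set ns. n + 1 \<le> param_count ns) \<and> length ns - 1 \<le> param_count ns"
    using assms
  proof (induction ns rule: induct_list012)
    case (3 n0 n1 rest)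
    obtain n0' n1' where "n0 = Suc n0'" "n1 = Suc n1'"
      using "3.prems"(2) by (cases n0; cases n1) auto
    then have a: "n0 + 1 \<le> n1 * (n0 + 1)" and b: "n1 + 1 \<le> n1 * (n0 + 1)" by simp_all
    show ?case
    proof (cases rest)
      case Nil
      then show ?thesis using a b by (simp add: param_count_Cons param_count_def)
    next
      case Cons
      then show ?thesis using "3.IH"(2) "3.prems"(2) a b by (auto simp: param_count_Cons)
    qed
  qed auto
  then show "\<forall>n\<in>set ns. n + 1 \<le> param_count ns" "length ns - 1 \<le> param_count ns" by auto
qed

lemma is_arch_param_count:
  assumes "is_arch d a"
  shows "\<forall>n\<in>set a. n + 1 \<le> param_count a" "length a - 1 \<le> param_count a" "d + 1 \<le> param_count a"
proof -
  have a: "2 \<le> length a" "hd a = d" "\<forall>n\<in>set a. 1 \<le> n"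
    using assms by (auto simp: is_arch_def in_set_conv_nth)
  show "\<forall>n\<in>set a. n + 1 \<le> param_count a" "length a - 1 \<le> param_count a"
    using param_count_bounds[OF a(1,3)] by auto
  then show "d + 1 \<le> param_count a" using a(1,2) by (cases a) auto
qed


lemma abs_clip_le: "0 \<le> D \<Longrightarrow> \<bar>clip D x\<bar> \<le> D"
  unfolding clip_def by (auto simp: sgn_if min_def)

lemma clip_diff_abs_le: "0 \<le> D \<Longrightarrow> \<bar>clip D x - clip D y\<bar> \<le> \<bar>x - y\<bar>"
  unfolding clip_def by (auto simp: sgn_if min_def)

definition clipped_net :: "real \<Rightarrow> real \<Rightarrow> nat list \<Rightarrow> real \<Rightarrow> params \<Rightarrow> (nat \<Rightarrow> real) \<Rightarrow> real" where
  "clipped_net u v a D \<theta> x = (if x \<in> cube u v (hd a) then clip D (realization a \<theta> x) else 0)"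

lemma NN_class_eq: "NN_class u v a R D = {clipped_net u v a D \<theta> | \<theta>. param_bounded a R \<theta>}"
  unfolding NN_class_def clipped_net_def[abs_def] by simp

lemma clipped_net_abs_le: "0 \<le> D \<Longrightarrow> \<bar>clipped_net u v a D \<theta> x\<bar> \<le> D"
  unfolding clipped_net_def using abs_clip_le by auto

definition param_lipschitz :: "nat list \<Rightarrow> real \<Rightarrow> real \<Rightarrow> real" where
  "param_lipschitz a R r =
     real (param_count a) * (r + 1) * (2 * max 1 R * real (param_count a)) ^ param_count a"

lemma param_lipschitz_ge_1:
  assumes "is_arch d a" "0 \<le> r"
  shows "1 \<le> param_lipschitz a R r"
proof -
  have P: "1 \<le> real (param_count a)" using is_arch_param_count(3)[OF assms(1)] by simp
  then have "1 \<le> 2 * max 1 R * real (param_count a)" using mult_mono[of 1 "2 * max 1 R" 1] by force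
  moreover have "1 \<le> real (param_count a) * (r + 1)" using P assms(2) mult_mono[of 1 _ 1 "r + 1"] by force
  ultimately show ?thesis unfolding param_lipschitz_def using one_le_power mult_mono[of 1 _ 1] by force
qed

lemma clipped_net_diff_abs_le:
  assumes arch: "is_arch d a" and \<theta>: "param_bounded a R \<theta>" "param_bounded a R \<theta>'"
    and close: "params_close a \<delta> \<theta> \<theta>'" and "0 \<le> D" "0 \<le> \<delta>"
  shows "\<bar>clipped_net u v a D \<theta> x - clipped_net u v a D \<theta>' x\<bar> \<le> \<delta> * param_lipschitz a R (max \<bar>u\<bar> \<bar>v\<bar>)"
proof (cases "x \<in> cube u v (hd a)")
  case True
  let ?P = "param_count a" and ?r = "max \<bar>u\<bar> \<bar>v\<bar>" and ?\<rho> = "2 * max 1 R * real (param_count a)"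
  have P: "\<forall>n\<in>set a. real n + 1 \<le> real ?P" "length a - 1 \<le> ?P" "1 \<le> real ?P"
    using is_arch_param_count[OF arch] by auto
  have \<rho>: "1 \<le> ?\<rho>" using P(3) mult_mono[of 1 "2 * max 1 R" 1] by force
  have "\<bar>net_eval a \<theta> x 0 - net_eval a \<theta>' x 0\<bar>
      \<le> ?\<rho> ^ (length a - 1) * (0 + real (length a - 1) * \<delta> * (?r + 1))"
    using True arch assms(6) P(1)
    by (intro net_eval_diff_abs_le param_bounded_mono[OF \<theta>(1)] param_bounded_mono[OF \<theta>(2)] close)
      (auto simp: cube_def is_arch_def)
  also have "\<dots> \<le> ?\<rho> ^ ?P * (real ?P * \<delta> * (?r + 1))"
  proof (intro mult_mono power_increasing)
    show "0 + real (length a - 1) * \<delta> * (?r + 1) \<le> real ?P * \<delta> * (?r + 1)"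
      using P(2) assms(6) by (simp add: mult_right_mono)
  qed (use P(2) \<rho> assms(6) in auto)
  also have "\<dots> = \<delta> * param_lipschitz a R ?r" by (simp add: param_lipschitz_def mult_ac)
  finally show ?thesis
    using True clip_diff_abs_le[OF assms(5), of "realization a \<theta> x" "realization a \<theta>' x"]
    by (simp add: clipped_net_def realization_def)
next
  case False
  have "1 \<le> param_lipschitz a R (max \<bar>u\<bar> \<bar>v\<bar>)" by (rule param_lipschitz_ge_1[OF arch]) simp
  then show ?thesis using False assms(6) by (simp add: clipped_net_def)
qed


section \<open>Finite parameter grids\<close>

definition grid_functions :: "'a set \<Rightarrow> real set \<Rightarrow> ('a \<Rightarrow> real) set" where
  "grid_functions I S = {f. (\<forall>x\<in>I. f x \<in> S) \<and> (\<forall>x. x \<notin> I \<longrightarrow> f x = 0)}"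

lemma grid_functions_eq_image_PiE:
  "grid_functions I S = (\<lambda>g x. if x \<in> I then g x else 0) ` (I \<rightarrow>\<^sub>E S)"
proof (intro set_eqI iffI)
  fix f assume "f \<in> grid_functions I S"
  then show "f \<in> (\<lambda>g x. if x \<in> I then g x else 0) ` (I \<rightarrow>\<^sub>E S)"
    by (intro image_eqI[of _ _ "restrict f I"]) (auto simp: grid_functions_def)
qed (auto simp: grid_functions_def)

lemma finite_card_grid_functions:
  assumes "finite I" "finite S"
  shows "finite (grid_functions I S)" "card (grid_functions I S) \<le> card S ^ card I"
  using assms card_image_le[of "I \<rightarrow>\<^sub>E S"] by (auto simp: grid_functions_eq_image_PiE card_PiE finite_PiE)

fun param_grid :: "nat list \<Rightarrow> real set \<Rightarrow> params set" where
  "param_grid (n0 # n1 # ns) S = (\<lambda>(A, b, ps). (A, b) # ps) `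
     (curry ` grid_functions ({..<n1} \<times> {..<n0}) S \<times> grid_functions {..<n1} S \<times> param_grid (n1 # ns) S)"
| "param_grid _ S = {[]}"

lemma finite_card_param_grid:
  "finite S \<Longrightarrow> finite (param_grid ns S) \<and> card (param_grid ns S) \<le> card S ^ param_count ns"
proof (induction ns S rule: param_grid.induct)
  case (1 n0 n1 ns S)
  let ?X = "curry ` grid_functions ({..<n1} \<times> {..<n0}) S \<times> grid_functions {..<n1} S \<times> param_grid (n1 # ns) S"
  have fin: "finite ?X" using 1 by (simp add: finite_card_grid_functions(1))
  have "card ?X \<le> card (grid_functions ({..<n1} \<times> {..<n0}) S) * (card (grid_functions {..<n1} S) * card (param_grid (n1 # ns) S))"
    by (simp add: card_cartesian_product card_image_le 1 finite_card_grid_functions)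
  also have "\<dots> \<le> card S ^ (n1 * n0) * (card S ^ n1 * card S ^ param_count (n1 # ns))"
    using 1 finite_card_grid_functions(2)[of "{..<n1} \<times> {..<n0}" S] finite_card_grid_functions(2)[of "{..<n1}" S]
    by (intro mult_mono) (simp_all add: card_cartesian_product)
  also have "\<dots> = card S ^ param_count (n0 # n1 # ns)"
    by (simp add: param_count_Cons power_add algebra_simps)
  finally show ?case using fin card_image_le[OF fin, of "\<lambda>(A, b, ps). (A, b) # ps"] by simp
qed (auto simp: param_count_def)

lemma param_grid_bounded: "S \<subseteq> {-R..R} \<Longrightarrow> \<theta> \<in> param_grid ns S \<Longrightarrow> param_bounded ns R \<theta>"
proof (induction ns S arbitrary: \<theta> rule: param_grid.induct)
  case (1 n0 n1 ns S)
  then obtain g b ps where \<theta>: "\<theta> = (curry g, b) # ps" "g \<in> grid_functions ({..<n1} \<times> {..<n0}) S"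
    "b \<in> grid_functions {..<n1} S" "ps \<in> param_grid (n1 # ns) S"
    by auto
  have "\<bar>y\<bar> \<le> R" if "y \<in> S" for y using that "1.prems"(1) by (auto simp: abs_le_iff)
  then show ?case using \<theta> "1.IH" "1.prems"(1) by (simp add: param_bounded_Cons grid_functions_def)
qed (simp_all add: param_bounded_def)

lemma param_grid_dense:
  assumes "\<And>x. \<bar>x\<bar> \<le> R \<Longrightarrow> rnd x \<in> S \<and> \<bar>x - rnd x\<bar> \<le> \<delta>"
  shows "param_bounded ns R \<theta> \<Longrightarrow> \<exists>\<theta>'\<in>param_grid ns S. params_close ns \<delta> \<theta> \<theta>'"
proof (induction ns arbitrary: \<theta> rule: induct_list012)
  case (3 n0 n1 ns)
  then obtain A b ps where \<theta>: "\<theta> = (A, b) # ps"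
    by (cases \<theta>) (auto simp: param_bounded_def)
  have bd: "\<forall>j<n1. \<bar>b j\<bar> \<le> R \<and> (\<forall>k<n0. \<bar>A j k\<bar> \<le> R)" "param_bounded (n1 # ns) R ps"
    using "3.prems" unfolding \<theta> param_bounded_Cons by auto
  obtain ps' where ps': "ps' \<in> param_grid (n1 # ns) S" "params_close (n1 # ns) \<delta> ps ps'"
    using "3.IH"(2)[OF bd(2)] by auto
  define A' where "A' = (\<lambda>j k. if j < n1 \<and> k < n0 then rnd (A j k) else 0)"
  define b' where "b' = (\<lambda>j. if j < n1 then rnd (b j) else 0)"
  have "case_prod A' \<in> grid_functions ({..<n1} \<times> {..<n0}) S" "b' \<in> grid_functions {..<n1} S"
    using bd(1) assms unfolding A'_def b'_def grid_functions_def by auto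
  then have "A' \<in> curry ` grid_functions ({..<n1} \<times> {..<n0}) S" "b' \<in> grid_functions {..<n1} S"
    using image_eqI[of A' curry "case_prod A'"] by auto
  then have "(A', b') # ps' \<in> param_grid (n0 # n1 # ns) S"
    using ps'(1) by (auto intro!: image_eqI[of _ _ "(A', b', ps')"])
  moreover have "params_close (n0 # n1 # ns) \<delta> \<theta> ((A', b') # ps')"
    using bd(1) assms ps'(2) unfolding \<theta> params_close_Cons A'_def b'_def by simp
  ultimately show ?case by blast
qed (simp_all add: param_bounded_def params_close_def)

definition mesh :: "real \<Rightarrow> real \<Rightarrow> real set" where
  "mesh \<delta> R = (\<lambda>k. \<delta> * of_int k) ` {-\<lfloor>R / \<delta>\<rfloor>..\<lfloor>R / \<delta>\<rfloor>}"

(* Rounding toward zero keeps the index within [-R/delta, R/delta]. *)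
definition round_to_mesh :: "real \<Rightarrow> real \<Rightarrow> real" where
  "round_to_mesh \<delta> x = (if 0 \<le> x then \<delta> * of_int \<lfloor>x / \<delta>\<rfloor> else - (\<delta> * of_int \<lfloor>- x / \<delta>\<rfloor>))"

lemma round_down_to_mesh:
  assumes "0 < \<delta>" "0 \<le> x" "x \<le> R"
  shows "\<delta> * of_int \<lfloor>x / \<delta>\<rfloor> \<in> mesh \<delta> R" "-(\<delta> * of_int \<lfloor>x / \<delta>\<rfloor>) \<in> mesh \<delta> R"
    "\<bar>x - \<delta> * of_int \<lfloor>x / \<delta>\<rfloor>\<bar> \<le> \<delta>"
proof -
  have "\<lfloor>x / \<delta>\<rfloor> \<le> \<lfloor>R / \<delta>\<rfloor>" "0 \<le> \<lfloor>x / \<delta>\<rfloor>"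
    using assms by (auto intro!: floor_mono divide_right_mono)
  then have k: "\<lfloor>x / \<delta>\<rfloor> \<in> {-\<lfloor>R / \<delta>\<rfloor>..\<lfloor>R / \<delta>\<rfloor>}" "-\<lfloor>x / \<delta>\<rfloor> \<in> {-\<lfloor>R / \<delta>\<rfloor>..\<lfloor>R / \<delta>\<rfloor>}"
    by (auto simp del: zero_le_floor)
  show "\<delta> * of_int \<lfloor>x / \<delta>\<rfloor> \<in> mesh \<delta> R" "-(\<delta> * of_int \<lfloor>x / \<delta>\<rfloor>) \<in> mesh \<delta> R"
    unfolding mesh_def by (rule image_eqI[OF _ k(1)], simp) (rule image_eqI[OF _ k(2)], simp)
  have "of_int \<lfloor>x / \<delta>\<rfloor> \<le> x / \<delta>" "x / \<delta> < of_int \<lfloor>x / \<delta>\<rfloor> + 1"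
    by linarith+
  then have "\<delta> * of_int \<lfloor>x / \<delta>\<rfloor> \<le> x" "x < \<delta> * of_int \<lfloor>x / \<delta>\<rfloor> + \<delta>"
    using assms(1) by (simp_all add: le_divide_eq divide_less_eq algebra_simps)
  then show "\<bar>x - \<delta> * of_int \<lfloor>x / \<delta>\<rfloor>\<bar> \<le> \<delta>" by simp
qed

lemma round_to_mesh:
  assumes "0 < \<delta>" "\<bar>x\<bar> \<le> R"
  shows "round_to_mesh \<delta> x \<in> mesh \<delta> R \<and> \<bar>x - round_to_mesh \<delta> x\<bar> \<le> \<delta>"
  using round_down_to_mesh[OF assms(1), of x R] round_down_to_mesh[OF assms(1), of "- x" R] assms(2)
  by (auto simp: round_to_mesh_def)

lemma mesh_props:
  assumes "0 < \<delta>" "0 \<le> R"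
  shows "mesh \<delta> R \<subseteq> {-R..R}" "finite (mesh \<delta> R)" "real (card (mesh \<delta> R)) \<le> 2 * R / \<delta> + 1"
proof -
  show "mesh \<delta> R \<subseteq> {-R..R}"
  proof (clarsimp simp: mesh_def)
    fix k :: int assume "- \<lfloor>R / \<delta>\<rfloor> \<le> k" "k \<le> \<lfloor>R / \<delta>\<rfloor>"
    then have "\<bar>of_int k\<bar> \<le> R / \<delta>" by linarith
    then have "\<bar>\<delta> * of_int k\<bar> \<le> R" using assms by (simp add: abs_mult field_simps)
    then show "- R \<le> \<delta> * of_int k \<and> \<delta> * of_int k \<le> R" by (simp add: abs_le_iff)
  qed
  show "finite (mesh \<delta> R)" unfolding mesh_def by simp
  have "card (mesh \<delta> R) \<le> nat (2 * \<lfloor>R / \<delta>\<rfloor> + 1)"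
    unfolding mesh_def using card_image_le[of "{-\<lfloor>R / \<delta>\<rfloor>..\<lfloor>R / \<delta>\<rfloor>}"] by simp
  then have "real (card (mesh \<delta> R)) \<le> real (nat (2 * \<lfloor>R / \<delta>\<rfloor> + 1))"
    by (simp only: of_nat_le_iff)
  also have "\<dots> = 2 * of_int \<lfloor>R / \<delta>\<rfloor> + 1" using assms by simp
  also have "\<dots> \<le> 2 * R / \<delta> + 1" by linarith
  finally show "real (card (mesh \<delta> R)) \<le> 2 * R / \<delta> + 1" .
qed

lemma param_grid_mesh_net:
  fixes a :: "nat list"
  assumes "0 < \<delta>" "0 \<le> R"
  defines "G \<equiv> param_grid a (mesh \<delta> R)"
  shows "G \<subseteq> {\<theta>. param_bounded a R \<theta>}" "finite G" "real (card G) \<le> (2 * R / \<delta> + 1) ^ param_count a"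
    "\<And>\<theta>. param_bounded a R \<theta> \<Longrightarrow> \<exists>\<theta>'\<in>G. params_close a \<delta> \<theta> \<theta>'"
proof -
  note mesh = mesh_props[OF assms(1,2)]
  show "G \<subseteq> {\<theta>. param_bounded a R \<theta>}" unfolding G_def using param_grid_bounded[OF mesh(1)] by blast
  show "finite G" unfolding G_def using finite_card_param_grid[OF mesh(2)] by blast
  have "real (card G) \<le> real (card (mesh \<delta> R)) ^ param_count a"
    unfolding G_def using finite_card_param_grid[OF mesh(2)] by (simp flip: of_nat_power)
  also have "\<dots> \<le> (2 * R / \<delta> + 1) ^ param_count a" using mesh(3) by (intro power_mono) auto
  finally show "real (card G) \<le> (2 * R / \<delta> + 1) ^ param_count a" .
  show "\<exists>\<theta>'\<in>G. params_close a \<delta> \<theta> \<theta>'" if "param_bounded a R \<theta>" for \<theta>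
    unfolding G_def using param_grid_dense[OF round_to_mesh[OF assms(1)] that] .
qed


section \<open>Measurability\<close>

lemma measurable_coordinate: "(\<lambda>x. x k) \<in> borel_measurable (vec_space d)"
proof (cases "k < d")
  case False
  then have "(\<lambda>x. x k) \<in> borel_measurable (vec_space d) \<longleftrightarrow> (\<lambda>x. undefined :: real) \<in> borel_measurable (vec_space d)"
    by (intro measurable_cong) (auto simp: vec_space_def space_PiM PiE_def extensional_def)
  then show ?thesis by simp
qed (auto simp: vec_space_def intro: measurable_component_singleton)

lemma borel_measurable_net_eval:
  "(\<And>k. (\<lambda>x. g x k) \<in> borel_measurable N) \<Longrightarrow> (\<lambda>x. net_eval ns \<theta> (g x) j) \<in> borel_measurable N"
proof (induction \<theta> arbitrary: ns g j)
  case Nil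
  then show ?case by (cases ns rule: remdups_adj.cases) auto
next
  case (Cons p ps)
  obtain A b where p: "p = (A, b)" by force
  have affine: "(\<lambda>x. affine n0 n1 A b (g x) k) \<in> borel_measurable N" for n0 n1 k
    unfolding affine_def using Cons.prems by measurable
  have net: "(\<lambda>x. net_eval (n1 # rest) ps (relu_vec (affine n0 n1 A b (g x))) j) \<in> borel_measurable N"
    for n0 n1 rest
    unfolding relu_vec_def by (intro Cons.IH borel_measurable_max borel_measurable_const affine)
  show ?case
  proof (cases ns rule: remdups_adj.cases)
    case (3 n0 n1 rest)
    then show ?thesis using affine net by (cases "rest = []") (simp_all add: p)
  qed (use Cons.prems in \<open>simp_all add: p\<close>)
qed

lemma borel_measurable_clipped_net: "clipped_net u v a D \<theta> \<in> borel_measurable (vec_space d)"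
proof -
  have "(\<lambda>x. realization a \<theta> x) \<in> borel_measurable (vec_space d)"
    unfolding realization_def by (intro borel_measurable_net_eval measurable_coordinate)
  then have clip: "(\<lambda>x. clip D (realization a \<theta> x)) \<in> borel_measurable (vec_space d)"
    unfolding clip_def by measurable
  have "{x \<in> space (vec_space d). \<forall>i\<in>{..<hd a}. u \<le> x i \<and> x i \<le> v} \<in> sets (vec_space d)"
    using measurable_coordinate by measurable
  moreover have "{x \<in> space (vec_space d). \<forall>i\<in>{..<hd a}. u \<le> x i \<and> x i \<le> v}
      = {x \<in> space (vec_space d). x \<in> cube u v (hd a)}"
    unfolding cube_def by auto
  ultimately show ?thesis
    unfolding clipped_net_def[abs_def] by (intro measurable_If[OF clip borel_measurable_const]) simp
qed

(* For d = 0 the maximum defining norm_inf is taken over the empty set. *)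
lemma trunc_eq_if: "1 \<le> d \<Longrightarrow> trunc d K \<phi> y = (if \<forall>i<d. \<bar>y i\<bar> \<le> K then \<phi> y else 0)"
  unfolding trunc_def norm_inf_def by (subst Max_le_iff) (auto simp: lessThan_empty_iff)

lemma borel_measurable_trunc:
  assumes "1 \<le> d" "\<phi> \<in> borel_measurable (vec_space d)"
  shows "trunc d K \<phi> \<in> borel_measurable (vec_space d)"
proof -
  have "Measurable.pred (vec_space d) (\<lambda>y. \<forall>i\<in>{..<d}. \<bar>y i\<bar> \<le> K)"
    using measurable_coordinate by measurable
  then have "(\<lambda>y. if \<forall>i\<in>{..<d}. \<bar>y i\<bar> \<le> K then \<phi> y else 0) \<in> borel_measurable (vec_space d)"
    using assms(2) by measurable
  moreover have "trunc d K \<phi> = (\<lambda>y. if \<forall>i\<in>{..<d}. \<bar>y i\<bar> \<le> K then \<phi> y else 0)"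
    using trunc_eq_if[OF assms(1)] by (auto simp: fun_eq_iff)
  ultimately show ?thesis by simp
qed

lemma norm2_le: "(\<forall>i<d. \<bar>y i\<bar> \<le> K) \<Longrightarrow> norm2 d y \<le> real d * K"
proof -
  assume K: "\<forall>i<d. \<bar>y i\<bar> \<le> K"
  have "norm2 d y = L2_set y {..<d}" unfolding norm2_def L2_set_def by simp
  also have "\<dots> \<le> (\<Sum>i<d. \<bar>y i\<bar>)" by (rule L2_set_le_sum_abs)
  also have "\<dots> \<le> (\<Sum>i<d. K)" using K by (intro sum_mono) auto
  finally show ?thesis by simp
qed

lemma trunc_abs_le:
  assumes "1 \<le> d" "\<And>y. \<bar>\<phi> y\<bar> \<le> c * (1 + norm2 d y powr lam)" "0 \<le> c" "0 \<le> lam"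
  shows "\<bar>trunc d K \<phi> y\<bar> \<le> c * (1 + (real d * K) powr lam)"
proof (cases "\<forall>i<d. \<bar>y i\<bar> \<le> K")
  case True
  have "\<bar>\<phi> y\<bar> \<le> c * (1 + norm2 d y powr lam)" by (rule assms(2))
  also have "\<dots> \<le> c * (1 + (real d * K) powr lam)"
    using norm2_le[OF True] assms(3,4)
    by (intro mult_left_mono add_left_mono powr_mono2) (auto simp: norm2_def intro: sum_nonneg)
  finally show ?thesis using True trunc_eq_if[OF assms(1)] by simp
next
  case False
  then show ?thesis using assms(3) trunc_eq_if[OF assms(1), of K \<phi> y] by auto
qed

section \<open>Concentration and covering\<close>

definition generalization_gap ::
    "'w measure \<Rightarrow> ('w \<Rightarrow> 'a) \<Rightarrow> ('w \<Rightarrow> 'b) \<Rightarrow> (nat \<Rightarrow> 'w \<Rightarrow> 'a) \<Rightarrow> (nat \<Rightarrow> 'w \<Rightarrow> 'b) \<Rightarrow> nat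
      \<Rightarrow> ('b \<Rightarrow> real) \<Rightarrow> ('a \<Rightarrow> real) \<Rightarrow> 'w \<Rightarrow> real" where
  "generalization_gap M X Y xs ys m t f \<omega> =
     \<bar>(\<integral>\<omega>'. (f (X \<omega>') - t (Y \<omega>'))\<^sup>2 \<partial>M) - (1 / real m) * (\<Sum>i\<in>{1..m}. (f (xs i \<omega>) - t (ys i \<omega>))\<^sup>2)\<bar>"

lemma generalization_gap_prob_le:
  assumes "prob_space M"
    and XY: "(\<lambda>\<omega>. (X \<omega>, Y \<omega>)) \<in> measurable M (V \<Otimes>\<^sub>M W)"
    and sample: "\<And>i. (\<lambda>\<omega>. (xs i \<omega>, ys i \<omega>)) \<in> measurable M (V \<Otimes>\<^sub>M W)"
    and indep: "prob_space.indep_vars M (\<lambda>_. V \<Otimes>\<^sub>M W) (\<lambda>i \<omega>. (xs i \<omega>, ys i \<omega>)) UNIV"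
    and distr: "\<And>i. distr M (V \<Otimes>\<^sub>M W) (\<lambda>\<omega>. (xs i \<omega>, ys i \<omega>)) = distr M (V \<Otimes>\<^sub>M W) (\<lambda>\<omega>. (X \<omega>, Y \<omega>))"
    and "f \<in> borel_measurable V" "t \<in> borel_measurable W"
    and f: "\<And>x. \<bar>f x\<bar> \<le> D" and t: "\<And>y. \<bar>t y\<bar> \<le> B" and "0 < D + B"
    and "0 < m" "0 \<le> s"
  shows "measure M {\<omega> \<in> space M. s \<le> generalization_gap M X Y xs ys m t f \<omega>}
     \<le> 2 * exp (- 2 * real m * s\<^sup>2 / (D + B) ^ 4)"
proof -
  interpret prob_space M by fact
  define loss where "loss = (\<lambda>(x, y). (f x - t y)\<^sup>2)"
  have loss: "loss \<in> borel_measurable (V \<Otimes>\<^sub>M W)" unfolding loss_def using assms(6,7) by measurable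
  have range: "loss p \<in> {0..(D + B)\<^sup>2}" for p
  proof -
    have "\<bar>f (fst p) - t (snd p)\<bar> \<le> \<bar>D + B\<bar>" using f[of "fst p"] t[of "snd p"] by linarith
    then show ?thesis unfolding loss_def by (simp add: case_prod_beta abs_le_square_iff)
  qed
  have "indep_vars (\<lambda>_. borel) (\<lambda>i \<omega>. loss (xs i \<omega>, ys i \<omega>)) {1..m}"
    using indep_vars_compose2[OF indep loss] by (rule indep_vars_subset) simp
  moreover have "distr M borel (\<lambda>\<omega>. loss (xs i \<omega>, ys i \<omega>)) = distr M borel (\<lambda>\<omega>. loss (X \<omega>, Y \<omega>))" for i
    using distr_distr[OF loss sample, of i] distr_distr[OF loss XY] distr[of i] by (simp add: comp_def)
  moreover have "random_variable borel (\<lambda>\<omega>. loss (X \<omega>, Y \<omega>))" using loss XY by measurable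
  ultimately interpret Hoeffding_ineq_iid M "{1..m}" "\<lambda>i \<omega>. loss (xs i \<omega>, ys i \<omega>)"
      "\<lambda>\<omega>. loss (X \<omega>, Y \<omega>)" 0 "(D + B)\<^sup>2" "expectation (\<lambda>\<omega>. loss (X \<omega>, Y \<omega>))"
    using range by unfold_locales simp_all
  have "prob {\<omega> \<in> space M. s \<le> \<bar>(\<Sum>i\<in>{1..m}. loss (xs i \<omega>, ys i \<omega>)) / real (card {1..m})
      - expectation (\<lambda>\<omega>. loss (X \<omega>, Y \<omega>))\<bar>}
      \<le> 2 * exp (- 2 * real (card {1..m}) * s\<^sup>2 / ((D + B)\<^sup>2 - 0)\<^sup>2)"
    using assms(10-12) by (intro Hoeffding_ineq_abs_ge') auto
  then show ?thesis
    by (simp add: generalization_gap_def loss_def abs_minus_commute flip: power_mult)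
qed

lemma abs_diff_squares_le:
  fixes a b c :: real
  assumes "\<bar>a\<bar> \<le> D" "\<bar>b\<bar> \<le> D" "\<bar>c\<bar> \<le> B" "\<bar>a - b\<bar> \<le> \<eta>"
  shows "\<bar>(a - c)\<^sup>2 - (b - c)\<^sup>2\<bar> \<le> 2 * (D + B) * \<eta>"
proof -
  have "\<bar>(a - c)\<^sup>2 - (b - c)\<^sup>2\<bar> = \<bar>a - b\<bar> * \<bar>a + b - 2 * c\<bar>"
    by (simp add: power2_eq_square algebra_simps flip: abs_mult)
  also have "\<dots> \<le> \<eta> * (2 * (D + B))"
    using assms by (intro mult_mono) auto
  finally show ?thesis by (simp add: algebra_simps)
qed

lemma generalization_gap_diff_le:
  assumes "prob_space M" and "X \<in> measurable M V" "Y \<in> measurable M W"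
    and "f \<in> borel_measurable V" "g \<in> borel_measurable V" "t \<in> borel_measurable W"
    and "\<And>x. \<bar>f x\<bar> \<le> D" "\<And>x. \<bar>g x\<bar> \<le> D" "\<And>y. \<bar>t y\<bar> \<le> B"
    and "\<And>x. \<bar>f x - g x\<bar> \<le> \<eta>" and "0 < m"
  shows "\<bar>generalization_gap M X Y xs ys m t f \<omega> - generalization_gap M X Y xs ys m t g \<omega>\<bar> \<le> 4 * (D + B) * \<eta>"
proof -
  interpret prob_space M by fact
  let ?c = "2 * (D + B) * \<eta>"
  have pointwise: "\<bar>(f x - t y)\<^sup>2 - (g x - t y)\<^sup>2\<bar> \<le> ?c" for x y
    using assms(7-10) by (rule abs_diff_squares_le)
  have integrable: "integrable M (\<lambda>\<omega>. (h (X \<omega>) - t (Y \<omega>))\<^sup>2)"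
    if "h \<in> borel_measurable V" "\<And>x. \<bar>h x\<bar> \<le> D" for h
  proof -
    have "norm ((h (X \<omega>) - t (Y \<omega>))\<^sup>2) \<le> (D + B)\<^sup>2" for \<omega>
    proof -
      have "\<bar>h (X \<omega>) - t (Y \<omega>)\<bar> \<le> \<bar>D + B\<bar>" using that(2)[of "X \<omega>"] assms(9)[of "Y \<omega>"] by linarith
      then show ?thesis by (simp add: abs_le_square_iff)
    qed
    then show ?thesis using that(1) assms(2,3,6)
      by (intro integrable_const_bound[where B = "(D + B)\<^sup>2"]) auto
  qed
  have "\<bar>(\<integral>\<omega>'. (f (X \<omega>') - t (Y \<omega>'))\<^sup>2 \<partial>M) - (\<integral>\<omega>'. (g (X \<omega>') - t (Y \<omega>'))\<^sup>2 \<partial>M)\<bar>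
      = \<bar>\<integral>\<omega>'. (f (X \<omega>') - t (Y \<omega>'))\<^sup>2 - (g (X \<omega>') - t (Y \<omega>'))\<^sup>2 \<partial>M\<bar>"
    using integrable[OF assms(4,7)] integrable[OF assms(5,8)] by simp
  also have "\<dots> \<le> (\<integral>\<omega>'. \<bar>(f (X \<omega>') - t (Y \<omega>'))\<^sup>2 - (g (X \<omega>') - t (Y \<omega>'))\<^sup>2\<bar> \<partial>M)"
    by (rule integral_abs_bound)
  also have "\<dots> \<le> ?c"
    using pointwise integrable[OF assms(4,7)] integrable[OF assms(5,8)] by (intro integral_le_const) auto
  finally have risk: "\<bar>(\<integral>\<omega>'. (f (X \<omega>') - t (Y \<omega>'))\<^sup>2 \<partial>M) - (\<integral>\<omega>'. (g (X \<omega>') - t (Y \<omega>'))\<^sup>2 \<partial>M)\<bar> \<le> ?c" .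
  have "\<bar>(\<Sum>i\<in>{1..m}. (f (xs i \<omega>) - t (ys i \<omega>))\<^sup>2) - (\<Sum>i\<in>{1..m}. (g (xs i \<omega>) - t (ys i \<omega>))\<^sup>2)\<bar> \<le> real m * ?c"
    using sum_abs[of "\<lambda>i. (f (xs i \<omega>) - t (ys i \<omega>))\<^sup>2 - (g (xs i \<omega>) - t (ys i \<omega>))\<^sup>2" "{1..m}"]
      sum_mono[of "{1..m}" "\<lambda>i. \<bar>(f (xs i \<omega>) - t (ys i \<omega>))\<^sup>2 - (g (xs i \<omega>) - t (ys i \<omega>))\<^sup>2\<bar>" "\<lambda>_. ?c"] pointwise
    by (simp add: sum_subtractf)
  then have "\<bar>(1 / real m) * (\<Sum>i\<in>{1..m}. (f (xs i \<omega>) - t (ys i \<omega>))\<^sup>2)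
      - (1 / real m) * (\<Sum>i\<in>{1..m}. (g (xs i \<omega>) - t (ys i \<omega>))\<^sup>2)\<bar> \<le> ?c"
    using assms(11) by (simp add: abs_mult field_simps flip: right_diff_distrib)
  with risk show ?thesis unfolding generalization_gap_def by linarith
qed

lemma borel_measurable_generalization_gap:
  assumes "f \<in> borel_measurable V" "t \<in> borel_measurable W"
    and "\<And>i. (\<lambda>\<omega>. (xs i \<omega>, ys i \<omega>)) \<in> measurable M (V \<Otimes>\<^sub>M W)"
  shows "generalization_gap N X Y xs ys m t f \<in> borel_measurable M"
proof -
  have "xs i \<in> measurable M V" "ys i \<in> measurable M W" for i
    using measurable_compose[OF assms(3) measurable_fst] measurable_compose[OF assms(3) measurable_snd]
    by (simp_all add: comp_def)
  then show ?thesis unfolding generalization_gap_def using assms(1,2) by measurable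
qed

lemma clipped_net_generalization_gap_diff_le:
  assumes "prob_space M" "X \<in> measurable M (vec_space d)" "Y \<in> measurable M W"
    and "t \<in> borel_measurable W" "\<And>y. \<bar>t y\<bar> \<le> B"
    and "is_arch d a" "param_bounded a R \<theta>" "param_bounded a R \<theta>'" "params_close a \<delta> \<theta> \<theta>'"
    and "0 \<le> \<delta>" "0 \<le> D" "0 < m"
  shows "\<bar>generalization_gap M X Y xs ys m t (clipped_net u v a D \<theta>) \<omega>
      - generalization_gap M X Y xs ys m t (clipped_net u v a D \<theta>') \<omega>\<bar>
    \<le> 4 * (D + B) * param_lipschitz a R (max \<bar>u\<bar> \<bar>v\<bar>) * \<delta>"
proof -
  have "\<bar>clipped_net u v a D \<theta> x - clipped_net u v a D \<theta>' x\<bar> \<le> \<delta> * param_lipschitz a R (max \<bar>u\<bar> \<bar>v\<bar>)" for x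
    using clipped_net_diff_abs_le assms(6-11) by blast
  then have "\<bar>generalization_gap M X Y xs ys m t (clipped_net u v a D \<theta>) \<omega>
      - generalization_gap M X Y xs ys m t (clipped_net u v a D \<theta>') \<omega>\<bar>
    \<le> 4 * (D + B) * (\<delta> * param_lipschitz a R (max \<bar>u\<bar> \<bar>v\<bar>))"
    by (rule generalization_gap_diff_le[OF assms(1-3) borel_measurable_clipped_net borel_measurable_clipped_net
        assms(4) clipped_net_abs_le[OF assms(11)] clipped_net_abs_le[OF assms(11)] assms(5) _ assms(12)])
  then show ?thesis by (simp add: mult_ac)
qed

(* The condition over the possibly uncountable set Theta is equivalent to countably many
   conditions over finite nets of mesh 1/(n+1). *)
lemma sets_all_le_of_nets:
  fixes F :: "'p \<Rightarrow> 'w \<Rightarrow> real"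
  assumes meas: "\<And>\<theta>. F \<theta> \<in> borel_measurable M"
    and lip: "\<And>\<theta> \<theta>' \<delta> \<omega>. \<theta> \<in> \<Theta> \<Longrightarrow> \<theta>' \<in> \<Theta> \<Longrightarrow> close \<delta> \<theta> \<theta>' \<Longrightarrow> 0 < \<delta> \<Longrightarrow> \<bar>F \<theta> \<omega> - F \<theta>' \<omega>\<bar> \<le> L * \<delta>"
    and nets: "\<And>\<delta>. 0 < \<delta> \<Longrightarrow> \<exists>G \<subseteq> \<Theta>. finite G \<and> (\<forall>\<theta>\<in>\<Theta>. \<exists>\<theta>'\<in>G. close \<delta> \<theta> \<theta>')"
    and "0 \<le> L"
  shows "{\<omega> \<in> space M. \<forall>\<theta>\<in>\<Theta>. F \<theta> \<omega> \<le> \<epsilon>} \<in> sets M"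
proof -
  define \<delta> :: "nat \<Rightarrow> real" where "\<delta> n = inverse (real (Suc n))" for n
  have "\<forall>n. \<exists>G \<subseteq> \<Theta>. finite G \<and> (\<forall>\<theta>\<in>\<Theta>. \<exists>\<theta>'\<in>G. close (\<delta> n) \<theta> \<theta>')"
    using nets by (simp add: \<delta>_def)
  then obtain G where G: "\<And>n. G n \<subseteq> \<Theta>" "\<And>n. finite (G n)" "\<And>n \<theta>. \<theta> \<in> \<Theta> \<Longrightarrow> \<exists>\<theta>'\<in>G n. close (\<delta> n) \<theta> \<theta>'"
    by metis
  have "(\<forall>\<theta>\<in>\<Theta>. F \<theta> \<omega> \<le> \<epsilon>) \<longleftrightarrow> (\<forall>n. \<forall>\<theta>\<in>G n. F \<theta> \<omega> \<le> \<epsilon> + L * \<delta> n)" for \<omega>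
  proof
    assume "\<forall>\<theta>\<in>\<Theta>. F \<theta> \<omega> \<le> \<epsilon>"
    then show "\<forall>n. \<forall>\<theta>\<in>G n. F \<theta> \<omega> \<le> \<epsilon> + L * \<delta> n"
      using G(1) \<open>0 \<le> L\<close> by (force simp: \<delta>_def intro: add_increasing2)
  next
    assume net: "\<forall>n. \<forall>\<theta>\<in>G n. F \<theta> \<omega> \<le> \<epsilon> + L * \<delta> n"
    show "\<forall>\<theta>\<in>\<Theta>. F \<theta> \<omega> \<le> \<epsilon>"
    proof
      fix \<theta> assume "\<theta> \<in> \<Theta>"
      have "F \<theta> \<omega> \<le> \<epsilon> + 2 * L * \<delta> n" for n
      proof -
        obtain \<theta>' where "\<theta>' \<in> G n" "close (\<delta> n) \<theta> \<theta>'" using G(3)[OF \<open>\<theta> \<in> \<Theta>\<close>] by blast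
        then show ?thesis
          using lip[OF \<open>\<theta> \<in> \<Theta>\<close>, of \<theta>' "\<delta> n" \<omega>] net G(1) by (force simp: \<delta>_def)
      qed
      moreover have "(\<lambda>n. \<epsilon> + 2 * L * \<delta> n) \<longlonglongrightarrow> \<epsilon> + 2 * L * 0"
        unfolding \<delta>_def by (intro tendsto_intros LIMSEQ_inverse_real_of_nat)
      ultimately show "F \<theta> \<omega> \<le> \<epsilon>" by (intro LIMSEQ_le_const[of "\<lambda>n. \<epsilon> + 2 * L * \<delta> n"]) auto
    qed
  qed
  moreover have "Measurable.pred M (\<lambda>\<omega>. \<forall>n. \<forall>\<theta>\<in>G n. F \<theta> \<omega> \<le> \<epsilon> + L * \<delta> n)"
    using meas G(2) by (intro pred_intros_countable pred_intros_finite) measurable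
  ultimately show ?thesis by (simp add: pred_def)
qed

lemma prob_all_le_of_net:
  fixes F :: "'p \<Rightarrow> 'w \<Rightarrow> real"
  assumes "prob_space M" and meas: "\<And>\<theta>. F \<theta> \<in> borel_measurable M"
    and lip: "\<And>\<theta> \<theta>' \<omega>. \<theta> \<in> \<Theta> \<Longrightarrow> \<theta>' \<in> G \<Longrightarrow> close \<theta> \<theta>' \<Longrightarrow> \<bar>F \<theta> \<omega> - F \<theta>' \<omega>\<bar> \<le> \<epsilon> / 2"
    and net: "finite G" "\<And>\<theta>. \<theta> \<in> \<Theta> \<Longrightarrow> \<exists>\<theta>'\<in>G. close \<theta> \<theta>'"
    and sets: "{\<omega> \<in> space M. \<forall>\<theta>\<in>\<Theta>. F \<theta> \<omega> \<le> \<epsilon>} \<in> sets M"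
    and tail: "\<And>\<theta>. \<theta> \<in> G \<Longrightarrow> measure M {\<omega> \<in> space M. \<epsilon> / 2 \<le> F \<theta> \<omega>} \<le> p"
  shows "1 - real (card G) * p \<le> measure M {\<omega> \<in> space M. \<forall>\<theta>\<in>\<Theta>. F \<theta> \<omega> \<le> \<epsilon>}"
proof -
  interpret prob_space M by fact
  define bad where "bad = (\<Union>\<theta>\<in>G. {\<omega> \<in> space M. \<epsilon> / 2 \<le> F \<theta> \<omega>})"
  have bad_sets: "{\<omega> \<in> space M. \<epsilon> / 2 \<le> F \<theta> \<omega>} \<in> sets M" for \<theta> using meas by measurable
  then have "bad \<in> sets M" unfolding bad_def using net(1) by blast
  have "space M - bad \<subseteq> {\<omega> \<in> space M. \<forall>\<theta>\<in>\<Theta>. F \<theta> \<omega> \<le> \<epsilon>}"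
  proof clarify
    fix \<omega> \<theta> assume "\<omega> \<in> space M" "\<omega> \<notin> bad" "\<theta> \<in> \<Theta>"
    then obtain \<theta>' where "\<theta>' \<in> G" "close \<theta> \<theta>'" "F \<theta>' \<omega> < \<epsilon> / 2"
      using net(2) unfolding bad_def by force
    then show "F \<theta> \<omega> \<le> \<epsilon>" using lip[OF \<open>\<theta> \<in> \<Theta>\<close>, of \<theta>' \<omega>] by linarith
  qed
  then have "prob (space M - bad) \<le> prob {\<omega> \<in> space M. \<forall>\<theta>\<in>\<Theta>. F \<theta> \<omega> \<le> \<epsilon>}"
    by (intro finite_measure_mono sets)
  moreover have "prob bad \<le> (\<Sum>\<theta>\<in>G. prob {\<omega> \<in> space M. \<epsilon> / 2 \<le> F \<theta> \<omega>})"
    unfolding bad_def using net(1) bad_sets by (intro finite_measure_subadditive_finite) auto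
  moreover have "\<dots> \<le> real (card G) * p" using tail by (simp add: sum_bounded_above)
  ultimately show ?thesis using prob_compl[OF \<open>bad \<in> sets M\<close>] by linarith
qed

lemma NN_class_generalization_gap_prob_ge:
  fixes X Y :: "'w \<Rightarrow> nat \<Rightarrow> real" and d :: nat and a :: "nat list" and u v R D B \<epsilon> :: real
  defines "V \<equiv> vec_space d"
  defines "\<delta> \<equiv> \<epsilon> / (8 * (D + B) * param_lipschitz a R (max \<bar>u\<bar> \<bar>v\<bar>))"
  assumes prob: "prob_space M"
    and X: "X \<in> measurable M V" and Y: "Y \<in> measurable M V"
    and sample: "\<And>i. (\<lambda>\<omega>. (xs i \<omega>, ys i \<omega>)) \<in> measurable M (V \<Otimes>\<^sub>M V)"
    and indep: "prob_space.indep_vars M (\<lambda>_. V \<Otimes>\<^sub>M V) (\<lambda>i \<omega>. (xs i \<omega>, ys i \<omega>)) UNIV"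
    and distr: "\<And>i. distr M (V \<Otimes>\<^sub>M V) (\<lambda>\<omega>. (xs i \<omega>, ys i \<omega>)) = distr M (V \<Otimes>\<^sub>M V) (\<lambda>\<omega>. (X \<omega>, Y \<omega>))"
    and t: "t \<in> borel_measurable V" "\<And>y. \<bar>t y\<bar> \<le> B" "0 \<le> B"
    and arch: "is_arch d a" and R: "0 < R" and D: "0 < D" and \<epsilon>: "0 < \<epsilon>" and m: "0 < m"
    and small: "2 * (2 * R / \<delta> + 1) ^ param_count a * exp (- real m * \<epsilon>\<^sup>2 / (2 * (D + B) ^ 4)) \<le> \<rho>"
  shows "1 - \<rho> \<le> measure M {\<omega> \<in> space M. \<forall>f \<in> NN_class u v a R D. generalization_gap M X Y xs ys m t f \<omega> \<le> \<epsilon>}"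
proof -
  interpret prob_space M by fact
  let ?\<Theta> = "{\<theta>. param_bounded a R \<theta>}" and ?Lip = "param_lipschitz a R (max \<bar>u\<bar> \<bar>v\<bar>)"
  let ?F = "\<lambda>\<theta>. generalization_gap M X Y xs ys m t (clipped_net u v a D \<theta>)"
  let ?p = "2 * exp (- real m * \<epsilon>\<^sup>2 / (2 * (D + B) ^ 4))"
  have "1 \<le> ?Lip" by (rule param_lipschitz_ge_1[OF arch]) simp
  define c where "c = 8 * (D + B) * ?Lip"
  have c: "0 < c" unfolding c_def using \<open>1 \<le> ?Lip\<close> D t(3) by simp
  then have \<delta>: "0 < \<delta>" unfolding \<delta>_def c_def[symmetric] using \<epsilon> by simp
  have c_half: "4 * (D + B) * ?Lip = c / 2" and \<delta>_eq: "\<delta> = \<epsilon> / c" unfolding c_def \<delta>_def by simp_all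
  have Lip_\<delta>: "4 * (D + B) * ?Lip * \<delta> = \<epsilon> / 2" unfolding c_half \<delta>_eq using c by simp
  have clipped_meas: "clipped_net u v a D \<theta> \<in> borel_measurable V" for \<theta>
    unfolding V_def by (rule borel_measurable_clipped_net)
  have F_meas: "?F \<theta> \<in> borel_measurable M" for \<theta>
    using clipped_meas t(1) sample by (rule borel_measurable_generalization_gap)
  have F_lip: "\<bar>?F \<theta> \<omega> - ?F \<theta>' \<omega>\<bar> \<le> 4 * (D + B) * ?Lip * \<delta>'"
    if "\<theta> \<in> ?\<Theta>" "\<theta>' \<in> ?\<Theta>" "params_close a \<delta>' \<theta> \<theta>'" "0 < \<delta>'" for \<theta> \<theta>' \<delta>' \<omega>
    using clipped_net_generalization_gap_diff_le[OF prob X[unfolded V_def] Y t(1,2) arch _ _ that(3)] that D m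
    by simp
  have sets: "{\<omega> \<in> space M. \<forall>\<theta>\<in>?\<Theta>. ?F \<theta> \<omega> \<le> \<epsilon>} \<in> sets M"
  proof (rule sets_all_le_of_nets[OF F_meas F_lip])
    show "\<exists>G\<subseteq>?\<Theta>. finite G \<and> (\<forall>\<theta>\<in>?\<Theta>. \<exists>\<theta>'\<in>G. params_close a \<delta>' \<theta> \<theta>')" if "0 < \<delta>'" for \<delta>'
      using param_grid_mesh_net[OF that, of R a] R by (intro exI[of _ "param_grid a (mesh \<delta>' R)"]) auto
  qed (use t(3) D \<open>1 \<le> ?Lip\<close> in auto)
  define G where "G = param_grid a (mesh \<delta> R)"
  note G = param_grid_mesh_net[OF \<delta> less_imp_le[OF R], of a, folded G_def]
  have tail: "measure M {\<omega> \<in> space M. \<epsilon> / 2 \<le> ?F \<theta> \<omega>} \<le> ?p" for \<theta>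
  proof -
    have "measure M {\<omega> \<in> space M. \<epsilon> / 2 \<le> ?F \<theta> \<omega>} \<le> 2 * exp (- 2 * real m * (\<epsilon> / 2)\<^sup>2 / (D + B) ^ 4)"
      by (rule generalization_gap_prob_le[OF prob measurable_Pair[OF X Y] sample indep distr
            clipped_meas t(1) clipped_net_abs_le[OF less_imp_le[OF D]] t(2)])
      (use D \<epsilon> m t(3) in auto)
    also have "\<dots> = ?p" by (simp add: power2_eq_square)
    finally show ?thesis .
  qed
  have lower: "1 - real (card G) * ?p \<le> measure M {\<omega> \<in> space M. \<forall>\<theta>\<in>?\<Theta>. ?F \<theta> \<omega> \<le> \<epsilon>}"
  proof (rule prob_all_le_of_net[OF prob F_meas _ G(2) _ sets tail])
    show "\<bar>?F \<theta> \<omega> - ?F \<theta>' \<omega>\<bar> \<le> \<epsilon> / 2"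
      if "\<theta> \<in> ?\<Theta>" "\<theta>' \<in> G" "params_close a \<delta> \<theta> \<theta>'" for \<theta> \<theta>' \<omega>
      using F_lip[OF that(1) _ that(3) \<delta>, of \<omega>] G(1) that(2) Lip_\<delta> by auto
    show "\<exists>\<theta>'\<in>G. params_close a \<delta> \<theta> \<theta>'" if "\<theta> \<in> ?\<Theta>" for \<theta> using G(4) that by auto
  qed
  moreover have "real (card G) * ?p \<le> \<rho>"
    using order_trans[OF mult_right_mono[OF G(3)] _] small by (simp add: mult.assoc mult.left_commute)
  moreover have "{\<omega> \<in> space M. \<forall>f \<in> NN_class u v a R D. generalization_gap M X Y xs ys m t f \<omega> \<le> \<epsilon>}
      = {\<omega> \<in> space M. \<forall>\<theta>\<in>?\<Theta>. ?F \<theta> \<omega> \<le> \<epsilon>}"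
    unfolding NN_class_eq by auto
  ultimately show ?thesis using lower by simp
qed

section \<open>Polynomials in five variables\<close>

lemma sum_if_const: "(\<Sum>i\<in>A. if P then f i else (0::real)) = (if P then sum f A else 0)"
  by simp

lemma sum_atMost_if_le:
  fixes N N' :: nat
  assumes "N \<le> N'"
  shows "(\<Sum>i\<le>N'. if i \<le> N then f i else 0) = (\<Sum>i\<le>N. f i)"
  using assms by (intro sum.mono_neutral_cong_right) auto

lemma poly5_sum_pad:
  fixes c :: "nat \<Rightarrow> nat \<Rightarrow> nat \<Rightarrow> nat \<Rightarrow> nat \<Rightarrow> real"
  assumes "N \<le> N'"
  shows "(\<Sum>i1\<le>N. \<Sum>i2\<le>N. \<Sum>i3\<le>N. \<Sum>i4\<le>N. \<Sum>i5\<le>N.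
            c i1 i2 i3 i4 i5 * x1 ^ i1 * x2 ^ i2 * x3 ^ i3 * x4 ^ i4 * x5 ^ i5)
       = (\<Sum>i1\<le>N'. \<Sum>i2\<le>N'. \<Sum>i3\<le>N'. \<Sum>i4\<le>N'. \<Sum>i5\<le>N'.
            (if i1 \<le> N \<and> i2 \<le> N \<and> i3 \<le> N \<and> i4 \<le> N \<and> i5 \<le> N then c i1 i2 i3 i4 i5 else 0)
              * x1 ^ i1 * x2 ^ i2 * x3 ^ i3 * x4 ^ i4 * x5 ^ i5)"
proof -
  have "(if i1 \<le> N \<and> i2 \<le> N \<and> i3 \<le> N \<and> i4 \<le> N \<and> i5 \<le> N then c i1 i2 i3 i4 i5 else 0)
              * x1 ^ i1 * x2 ^ i2 * x3 ^ i3 * x4 ^ i4 * x5 ^ i5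
      = (if i1 \<le> N then if i2 \<le> N then if i3 \<le> N then if i4 \<le> N then if i5 \<le> N then
           c i1 i2 i3 i4 i5 * x1 ^ i1 * x2 ^ i2 * x3 ^ i3 * x4 ^ i4 * x5 ^ i5
         else 0 else 0 else 0 else 0 else 0)" for i1 i2 i3 i4 i5
    by simp
  then show ?thesis using assms by (simp only: sum_if_const sum_atMost_if_le)
qed

lemma poly5_add:
  assumes "poly5 f" "poly5 g"
  shows "poly5 (\<lambda>x1 x2 x3 x4 x5. f x1 x2 x3 x4 x5 + g x1 x2 x3 x4 x5)"
proof -
  obtain N c where f: "\<And>x1 x2 x3 x4 x5. f x1 x2 x3 x4 x5 = (\<Sum>i1\<le>N. \<Sum>i2\<le>N. \<Sum>i3\<le>N. \<Sum>i4\<le>N. \<Sum>i5\<le>N.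
          c i1 i2 i3 i4 i5 * x1 ^ i1 * x2 ^ i2 * x3 ^ i3 * x4 ^ i4 * x5 ^ i5)"
    using assms(1) unfolding poly5_def by blast
  obtain N' c' where g: "\<And>x1 x2 x3 x4 x5. g x1 x2 x3 x4 x5 = (\<Sum>i1\<le>N'. \<Sum>i2\<le>N'. \<Sum>i3\<le>N'. \<Sum>i4\<le>N'. \<Sum>i5\<le>N'.
          c' i1 i2 i3 i4 i5 * x1 ^ i1 * x2 ^ i2 * x3 ^ i3 * x4 ^ i4 * x5 ^ i5)"
    using assms(2) unfolding poly5_def by blast
  let ?M = "max N N'"
  let ?pad = "\<lambda>N c i1 i2 i3 i4 i5. if i1 \<le> N \<and> i2 \<le> N \<and> i3 \<le> N \<and> i4 \<le> N \<and> i5 \<le> N then c i1 i2 i3 i4 i5 else (0::real)"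
  show ?thesis unfolding poly5_def
  proof (intro exI allI)
    fix x1 x2 x3 x4 x5 :: real
    show "f x1 x2 x3 x4 x5 + g x1 x2 x3 x4 x5 = (\<Sum>i1\<le>?M. \<Sum>i2\<le>?M. \<Sum>i3\<le>?M. \<Sum>i4\<le>?M. \<Sum>i5\<le>?M.
        (?pad N c i1 i2 i3 i4 i5 + ?pad N' c' i1 i2 i3 i4 i5) * x1 ^ i1 * x2 ^ i2 * x3 ^ i3 * x4 ^ i4 * x5 ^ i5)"
      using poly5_sum_pad[OF max.cobounded1[of N N'], where c = c] poly5_sum_pad[OF max.cobounded2[of N' N], where c = c']
      by (simp add: f g sum.distrib distrib_right)
  qed
qed

lemma poly5_monomial: "poly5 (\<lambda>x1 x2 x3 x4 x5. c * x1 ^ a1 * x2 ^ a2 * x3 ^ a3 * x4 ^ a4 * x5 ^ a5)"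
proof -
  let ?N = "a1 + a2 + a3 + a4 + a5"
  have eq: "c * x1 ^ a1 * x2 ^ a2 * x3 ^ a3 * x4 ^ a4 * x5 ^ a5 = (\<Sum>i1\<le>?N. \<Sum>i2\<le>?N. \<Sum>i3\<le>?N. \<Sum>i4\<le>?N. \<Sum>i5\<le>?N.
      (if i1 = a1 \<and> i2 = a2 \<and> i3 = a3 \<and> i4 = a4 \<and> i5 = a5 then c else 0) * x1 ^ i1 * x2 ^ i2 * x3 ^ i3 * x4 ^ i4 * x5 ^ i5)"
    for x1 x2 x3 x4 x5 :: real
  proof -
    have "(if i1 = a1 \<and> i2 = a2 \<and> i3 = a3 \<and> i4 = a4 \<and> i5 = a5 then c else 0) * x1 ^ i1 * x2 ^ i2 * x3 ^ i3 * x4 ^ i4 * x5 ^ i5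
      = (if i1 = a1 then if i2 = a2 then if i3 = a3 then if i4 = a4 then if i5 = a5 then
           c * x1 ^ i1 * x2 ^ i2 * x3 ^ i3 * x4 ^ i4 * x5 ^ i5 else 0 else 0 else 0 else 0 else 0)"
      for i1 i2 i3 i4 i5 by simp
    then show ?thesis by (simp only: sum_if_const sum.delta finite_atMost atMost_iff) simp
  qed
  show ?thesis unfolding poly5_def by (rule exI, rule exI, intro allI, rule eq)
qed

section \<open>Sample size\<close>

lemma two_mult_exp_le:
  fixes W A \<rho> :: real
  assumes "0 < W" "0 < \<rho>" "ln (2 / \<rho>) + real n * ln W \<le> A"
  shows "2 * W ^ n * exp (- A) \<le> \<rho>"
proof -
  have "2 * W ^ n * exp (- A) = exp (ln 2 + real n * ln W - A)"
    using assms(1) by (simp add: exp_add exp_diff exp_minus exp_of_nat_mult field_simps)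
  also have "\<dots> \<le> exp (ln \<rho>)" using assms by (subst exp_le_cancel_iff) (simp add: ln_div)
  finally show ?thesis using assms(2) by simp
qed

lemma ln_one_plus_mult_le:
  fixes a b :: real
  assumes "0 \<le> a" "0 \<le> b"
  shows "ln (1 + a * b) \<le> ln (1 + a) + ln (1 + b)"
proof -
  have "1 + a * b \<le> (1 + a) * (1 + b)" using assms by (simp add: algebra_simps)
  then have "ln (1 + a * b) \<le> ln ((1 + a) * (1 + b))"
    using assms by (subst ln_le_cancel_iff) (auto intro: add_pos_nonneg mult_pos_pos)
  also have "\<dots> = ln (1 + a) + ln (1 + b)" using assms by (simp add: ln_mult)
  finally show ?thesis .
qed

lemma ln_one_plus_le_abs_ln:
  fixes R :: real
  assumes "0 < R"
  shows "ln (1 + R) \<le> 1 + \<bar>ln R\<bar>"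
proof -
  have "ln (1 + R) \<le> ln (2 * max 1 R)" using assms by simp
  also have "\<dots> = ln 2 + ln (max 1 R)" using assms by (simp add: ln_mult)
  also have "ln 2 \<le> (1::real)" using ln_le_minus_one[of 2] by simp
  also have "ln (max 1 R) \<le> \<bar>ln R\<bar>" by (cases "R \<le> 1") (auto simp: max_def)
  finally show ?thesis by simp
qed

lemma ln_grid_size_le:
  fixes R \<epsilon> q L :: real
  assumes "0 < R" "0 < \<epsilon>" "0 < q" "1 \<le> L"
  shows "ln (2 * R / (\<epsilon> / (8 * q * L)) + 1) \<le> ln (1 + R) + ln (1 + 16 * q) + ln (1 + L) + 1 / \<epsilon>"
proof -
  have "2 * R / (\<epsilon> / (8 * q * L)) + 1 = 1 + R * (16 * q) * L * (1 / \<epsilon>)"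
    using assms by (simp add: field_simps)
  also have "ln \<dots> \<le> ln (1 + R * (16 * q) * L) + ln (1 + 1 / \<epsilon>)"
    using assms by (intro ln_one_plus_mult_le) auto
  also have "ln (1 + R * (16 * q) * L) \<le> ln (1 + R * (16 * q)) + ln (1 + L)"
    using assms by (intro ln_one_plus_mult_le) auto
  also have "ln (1 + R * (16 * q)) \<le> ln (1 + R) + ln (1 + 16 * q)"
    using assms by (intro ln_one_plus_mult_le) auto
  also have "ln (1 + 1 / \<epsilon>) \<le> 1 / \<epsilon>" using assms by (intro ln_add_one_self_le_self) simp
  finally show ?thesis by simp
qed

lemma ln_one_plus_param_lipschitz_le:
  assumes "is_arch d a" "0 \<le> r" "0 < R"
  shows "ln (1 + param_lipschitz a R r)
    \<le> 1 + real (param_count a) + r + real (param_count a) * (1 + \<bar>ln R\<bar> + real (param_count a))"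
proof -
  let ?P = "real (param_count a)"
  have P: "1 \<le> ?P" using is_arch_param_count(3)[OF assms(1)] by simp
  have b: "1 \<le> 2 * max 1 R * ?P" using P mult_mono[of 1 "2 * max 1 R" 1 ?P] by auto
  have L: "1 \<le> param_lipschitz a R r" using param_lipschitz_ge_1[OF assms(1,2)] .
  have "ln (1 + param_lipschitz a R r) \<le> ln (2 * param_lipschitz a R r)" using L by simp
  also have "\<dots> = ln 2 + ln ?P + ln (r + 1) + ?P * (ln 2 + ln (max 1 R) + ln ?P)"
    using P assms(2,3) b by (simp add: param_lipschitz_def ln_mult ln_realpow)
  also have "\<dots> \<le> 1 + ?P + r + ?P * (1 + \<bar>ln R\<bar> + ?P)"
  proof -
    have l2: "ln 2 \<le> (1::real)" using ln_le_minus_one[of 2] by simp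
    have lP: "ln ?P \<le> ?P" using P by (intro ln_bound) auto
    have lr: "ln (r + 1) \<le> r" using ln_le_minus_one[of "r + 1"] assms(2) by simp
    have lR: "ln (max 1 R) \<le> \<bar>ln R\<bar>" by (cases "R \<le> 1") (auto simp: max_def)
    have "?P * (ln 2 + ln (max 1 R) + ln ?P) \<le> ?P * (1 + \<bar>ln R\<bar> + ?P)"
      using l2 lP lR P by (intro mult_left_mono) auto
    then show ?thesis using l2 lP lr by linarith
  qed
  finally show ?thesis .
qed

lemma loss_scale_le:
  fixes c2 lam K D :: real
  assumes "0 \<le> c2" "1 \<le> D" "1 \<le> X"
  shows "D + c2 * (1 + X) \<le> (1 + 2 * c2) * D * X"
proof -
  have DX: "1 \<le> D * X" using assms mult_mono[of 1 D 1 X] by simp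
  have "D \<le> D * X" "c2 \<le> c2 * (D * X)" "c2 * X \<le> c2 * (D * X)"
    using assms DX mult_left_mono[of 1 X D] mult_left_mono[of 1 "D * X" c2] mult_right_mono[of 1 D X]
    by (auto intro: mult_left_mono)
  then show ?thesis by (simp add: algebra_simps)
qed

lemma ln_one_plus_loss_scale_le:
  fixes c2 lam K D P :: real
  assumes "0 \<le> c2" "0 \<le> lam" "1 \<le> K" "1 \<le> D" "1 \<le> d" "real d \<le> P"
  shows "ln (1 + 16 * (D + c2 * (1 + (real d * K) powr lam)))
    \<le> ln (1 + 16 * (1 + 2 * c2)) + D + lam * P + K powr lam"
proof -
  let ?X = "(real d * K) powr lam" and ?c = "1 + 2 * c2"
  have dK: "1 \<le> real d * K" using assms(3,5) mult_mono[of 1 "real d" 1 K] by simp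
  then have X: "1 \<le> ?X" using assms(2) by (simp add: ge_one_powr_ge_zero)
  then have DX: "1 \<le> D * ?X" using assms(4) mult_mono[of 1 D 1 ?X] by simp
  have "1 + 16 * (D + c2 * (1 + ?X)) \<le> 1 + 16 * (?c * D * ?X)"
    using loss_scale_le[OF assms(1,4) X] by simp
  also have "\<dots> \<le> (1 + 16 * ?c) * (D * ?X)" using DX assms(1) by (simp add: algebra_simps)
  finally have "1 + 16 * (D + c2 * (1 + ?X)) \<le> (1 + 16 * ?c) * D * ?X" by (simp add: mult.assoc)
  moreover have "0 < 1 + 16 * (D + c2 * (1 + ?X))" using assms(1,4) X by (simp add: add_pos_nonneg)
  ultimately have "ln (1 + 16 * (D + c2 * (1 + ?X))) \<le> ln ((1 + 16 * ?c) * D * ?X)"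
    by (subst ln_le_cancel_iff) auto
  also have "\<dots> = ln (1 + 16 * ?c) + ln D + lam * (ln (real d) + ln K)"
    using assms(1,3-5) X by (simp add: ln_mult ln_powr)
  also have "\<dots> \<le> ln (1 + 16 * ?c) + D + lam * P + K powr lam"
  proof -
    have "ln D \<le> D" "ln (real d) \<le> P" using assms(4-6) ln_bound[of D] ln_bound[of "real d"] by auto
    moreover have "lam * ln K = ln (K powr lam)" using assms(3) by (simp add: ln_powr)
    moreover have "ln (K powr lam) \<le> K powr lam" using assms(3) by (intro ln_bound) simp
    ultimately show ?thesis using assms(2) mult_left_mono[of "ln (real d)" P lam] by (simp add: algebra_simps)
  qed
  finally show ?thesis .
qed

lemma loss_scale_pow4_le:
  fixes c2 lam K D P :: real
  assumes "0 \<le> c2" "0 \<le> lam" "1 \<le> K" "1 \<le> D" "1 \<le> d" "real d \<le> P"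
  shows "(D + c2 * (1 + (real d * K) powr lam)) ^ 4
    \<le> (1 + 2 * c2) ^ 4 * D ^ 4 * P ^ nat \<lceil>4 * lam\<rceil> * K powr (4 * lam)"
proof -
  let ?X = "(real d * K) powr lam"
  have X: "1 \<le> ?X" using assms(2,3,5) mult_mono[of 1 "real d" 1 K] by (simp add: ge_one_powr_ge_zero)
  have "(D + c2 * (1 + ?X)) ^ 4 \<le> ((1 + 2 * c2) * D * ?X) ^ 4"
    using loss_scale_le[OF assms(1,4) X] assms(1,4) X by (intro power_mono) auto
  also have "\<dots> = (1 + 2 * c2) ^ 4 * D ^ 4 * (real d powr (4 * lam) * K powr (4 * lam))"
    using assms(3,5) by (simp add: power_mult_distrib powr_mult powr_powr powr_realpow[symmetric] mult.commute)
  also have "\<dots> \<le> (1 + 2 * c2) ^ 4 * D ^ 4 * (P ^ nat \<lceil>4 * lam\<rceil> * K powr (4 * lam))"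
  proof -
    have "real d powr (4 * lam) \<le> P powr (4 * lam)" using assms by (intro powr_mono2) auto
    also have "\<dots> \<le> P powr real (nat \<lceil>4 * lam\<rceil>)" using assms by (intro powr_mono) auto
    finally have "real d powr (4 * lam) \<le> P ^ nat \<lceil>4 * lam\<rceil>" using assms(5,6) by (simp add: powr_realpow)
    then show ?thesis using assms(1,4) by (intro mult_left_mono mult_right_mono) auto
  qed
  finally show ?thesis by (simp add: mult.assoc)
qed

lemma log_failure_le_monomial:
  fixes P Kl D x1 x4 c0 lam r L lnW :: real
  assumes "1 \<le> P" "1 \<le> Kl" "1 \<le> D" "1 \<le> x1" "0 \<le> x4" "0 \<le> c0" "0 \<le> lam" "0 \<le> r"
    and lnW: "lnW \<le> (1 + \<bar>L\<bar>) + (c0 + D + lam * P + Kl) + (1 + P + r + P * (1 + \<bar>L\<bar> + P)) + x1"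
  shows "ln 2 + x4 + P * lnW \<le> (12 + c0 + lam + r) * (Kl * P ^ 3 * D * x1 * (1 + L\<^sup>2 + x4))"
proof -
  define Lq where "Lq = 1 + L\<^sup>2 + x4"
  define Z where "Z = Kl * D * x1 * Lq"
  define W where "W = P\<^sup>2 * Z"
  have "0 \<le> (\<bar>L\<bar> - 1)\<^sup>2" by simp
  then have "2 * \<bar>L\<bar> \<le> 1 + L\<^sup>2" by (simp add: power2_eq_square algebra_simps)
  then have Lq: "1 \<le> Lq" "\<bar>L\<bar> \<le> Lq" "x4 \<le> Lq"
    using assms(5) unfolding Lq_def by (auto simp: power2_eq_square)
  have "1 * 1 * 1 * 1 \<le> Z" "Kl * 1 * 1 * 1 \<le> Z" "1 * D * 1 * 1 \<le> Z" "1 * 1 * x1 * 1 \<le> Z" "1 * 1 * 1 * Lq \<le> Z"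
    unfolding Z_def using assms(2-4) Lq(1) by (intro mult_mono; simp)+
  then have Z: "1 \<le> Z" "Kl \<le> Z" "D \<le> Z" "x1 \<le> Z" "\<bar>L\<bar> \<le> Z" "x4 \<le> Z" using Lq by simp_all
  have PW: "Z \<le> W" "P * P \<le> W" "P * t \<le> W" if "0 \<le> t" "t \<le> Z" for t
  proof -
    have P2: "1 \<le> P\<^sup>2" "P \<le> P\<^sup>2"
      using assms(1) mult_mono[of 1 P 1 P] mult_left_mono[of 1 P P] by (simp_all add: power2_eq_square)
    show "Z \<le> W" "P * P \<le> W" "P * t \<le> W"
      unfolding W_def using mult_mono[OF P2(1), of Z Z] mult_mono[of "P * P" "P\<^sup>2" 1 Z]
        mult_mono[OF P2(2) that(2)] that(1) Z(1) assms(1) by (simp_all add: power2_eq_square)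
  qed
  have "lnW \<le> (10 + c0 + lam + r) * W"
  proof -
    have W1: "1 \<le> W" using PW[of 1] Z(1) by simp
    have "c0 \<le> c0 * W" "r \<le> r * W" "lam * P \<le> lam * W"
      using W1 assms(6-8) mult_left_mono[of 1 W] mult_left_mono[OF order_trans[OF _ PW(3)[of 1]], of P lam] Z(1)
      by auto
    moreover have "\<bar>L\<bar> \<le> W" "D \<le> W" "Kl \<le> W" "x1 \<le> W" "P \<le> W" "P * \<bar>L\<bar> \<le> W" "P * P \<le> W"
      using Z PW[of 1] PW[of "\<bar>L\<bar>"] assms(2-4) by auto
    moreover have "P * (1 + \<bar>L\<bar> + P) = P + P * \<bar>L\<bar> + P * P" by (simp add: algebra_simps)
    ultimately show ?thesis using lnW W1 by (simp add: distrib_right)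
  qed
  then have "P * lnW \<le> (10 + c0 + lam + r) * (P * W)"
    using mult_left_mono[of lnW _ P] assms(1) by (simp add: mult.left_commute)
  moreover have "ln 2 + x4 \<le> 2 * (P * W)"
  proof -
    have "1 \<le> P * W" "x4 \<le> P * W"
      using PW(1)[of 1] Z(1,6) assms(1) mult_mono[of 1 P 1 W] mult_mono[of 1 P x4 W] assms(5) by auto
    then show ?thesis using ln_le_minus_one[of 2] by simp
  qed
  moreover have "P * W = Kl * P ^ 3 * D * x1 * (1 + L\<^sup>2 + x4)"
    unfolding W_def Z_def Lq_def by (simp add: power2_eq_square power3_eq_cube)
  ultimately show ?thesis by (simp add: algebra_simps)
qed

(* The polynomial h2 of the statement, in the variables 1/eps, P(a), ln R, ln(1/rho) and D. *)
definition sample_size_poly :: "real \<Rightarrow> real \<Rightarrow> real \<Rightarrow> real \<Rightarrow> real \<Rightarrow> real \<Rightarrow> real \<Rightarrow> real \<Rightarrow> real" where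
  "sample_size_poly c2 lam r x1 x2 x3 x4 x5 =
     2 * (1 + 2 * c2) ^ 4 * (12 + ln (1 + 16 * (1 + 2 * c2)) + lam + r)
       * x1 ^ 3 * x2 ^ (nat \<lceil>4 * lam\<rceil> + 3) * x5 ^ 5 * (1 + x3\<^sup>2 + x4)"

lemma poly5_sample_size_poly: "poly5 (sample_size_poly c2 lam r)"
proof -
  let ?c = "2 * (1 + 2 * c2) ^ 4 * (12 + ln (1 + 16 * (1 + 2 * c2)) + lam + r)" and ?q = "nat \<lceil>4 * lam\<rceil> + 3"
  have "sample_size_poly c2 lam r = (\<lambda>x1 x2 x3 x4 x5.
      (?c * x1 ^ 3 * x2 ^ ?q * x3 ^ 0 * x4 ^ 0 * x5 ^ 5 + ?c * x1 ^ 3 * x2 ^ ?q * x3 ^ 2 * x4 ^ 0 * x5 ^ 5)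
      + ?c * x1 ^ 3 * x2 ^ ?q * x3 ^ 0 * x4 ^ 1 * x5 ^ 5)"
    by (simp add: fun_eq_iff sample_size_poly_def algebra_simps)
  then show ?thesis by (simp only:) (intro poly5_add poly5_monomial)
qed

lemma sample_size_poly_pos:
  assumes "0 \<le> c2" "0 \<le> lam" "0 \<le> r" "0 < x1" "0 < x2" "0 < x4" "0 < x5"
  shows "0 < sample_size_poly c2 lam r x1 x2 x3 x4 x5"
  using assms unfolding sample_size_poly_def by (intro mult_pos_pos add_pos_nonneg) auto

lemma sample_size_poly_scaled:
  fixes \<epsilon> :: real
  assumes "0 < \<epsilon>"
  shows "K powr (5 * lam) * sample_size_poly c2 lam r (1 / \<epsilon>) P L x4 D * \<epsilon>\<^sup>2
    = (12 + ln (1 + 16 * (1 + 2 * c2)) + lam + r) * (K powr lam * P ^ 3 * D * (1 / \<epsilon>) * (1 + L\<^sup>2 + x4))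
      * (2 * ((1 + 2 * c2) ^ 4 * D ^ 4 * P ^ nat \<lceil>4 * lam\<rceil> * K powr (4 * lam)))"
proof -
  have alg: "(k * k4) * (2 * b * c * x ^ 3 * (pq * p3) * (y4 * y) * l) * e\<^sup>2
      = c * (k * p3 * y * x * l) * (2 * (b * y4 * pq * k4))"
    if "x * e = 1" for c k p3 y x l b y4 pq k4 e :: real
  proof -
    have "x ^ 3 * e\<^sup>2 = x * (x * e) * (x * e)" by (simp add: power2_eq_square power3_eq_cube mult_ac)
    then have "x ^ 3 * e\<^sup>2 = x" using that by simp
    moreover have "(k * k4) * (2 * b * c * x ^ 3 * (pq * p3) * (y4 * y) * l) * e\<^sup>2
        = 2 * b * c * k * k4 * pq * p3 * y4 * y * l * (x ^ 3 * e\<^sup>2)" by (simp add: mult_ac)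
    ultimately show ?thesis by (simp add: mult_ac)
  qed
  have "K powr (5 * lam) = K powr lam * K powr (4 * lam)" by (simp add: powr_add[symmetric])
  moreover have "sample_size_poly c2 lam r (1 / \<epsilon>) P L x4 D
      = 2 * (1 + 2 * c2) ^ 4 * (12 + ln (1 + 16 * (1 + 2 * c2)) + lam + r) * (1 / \<epsilon>) ^ 3
        * (P ^ nat \<lceil>4 * lam\<rceil> * P ^ 3) * (D ^ 4 * D) * (1 + L\<^sup>2 + x4)"
    by (simp add: sample_size_poly_def power_add flip: power_Suc2)
  ultimately show ?thesis using alg[of "1 / \<epsilon>" \<epsilon>] assms by simp
qed

lemma sample_size_sufficient:
  fixes c2 lam r R K D \<epsilon> \<rho> :: real and d :: nat and a :: "nat list"
  defines "B \<equiv> c2 * (1 + (real d * K) powr lam)"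
  defines "\<delta> \<equiv> \<epsilon> / (8 * (D + B) * param_lipschitz a R r)"
  assumes "0 \<le> c2" "0 \<le> lam" "0 \<le> r" "is_arch d a" "1 \<le> d" "0 < R" "1 \<le> K" "1 \<le> D"
    and "0 < \<epsilon>" "\<epsilon> \<le> 1" "0 < \<rho>" "\<rho> < 1"
    and m: "K powr (5 * lam) * sample_size_poly c2 lam r (1 / \<epsilon>) (real (param_count a)) (ln R) (ln (1 / \<rho>)) D \<le> real m"
  shows "0 < m"
    and "2 * (2 * R / \<delta> + 1) ^ param_count a * exp (- real m * \<epsilon>\<^sup>2 / (2 * (D + B) ^ 4)) \<le> \<rho>"
proof -
  let ?P = "real (param_count a)" and ?Lip = "param_lipschitz a R r" and ?c3 = "1 + 2 * c2"
  let ?c6 = "12 + ln (1 + 16 * ?c3) + lam + r" and ?q = "nat \<lceil>4 * lam\<rceil>"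
  let ?Q = "K powr lam * ?P ^ 3 * D * (1 / \<epsilon>) * (1 + (ln R)\<^sup>2 + ln (1 / \<rho>))"
  have P: "1 \<le> ?P" "real d \<le> ?P" using is_arch_param_count(3)[OF assms(6)] by simp_all
  have "0 < sample_size_poly c2 lam r (1 / \<epsilon>) ?P (ln R) (ln (1 / \<rho>)) D"
    using assms(3-5,10,11,13,14) P by (intro sample_size_poly_pos) auto
  then show "0 < m" using m assms(9) by (smt (verit) of_nat_0_less_iff powr_gt_zero zero_less_mult_iff)
  have Lip: "1 \<le> ?Lip" using param_lipschitz_ge_1[OF assms(6,5)] .
  have B: "0 \<le> B" unfolding B_def using assms(3) by simp
  have DB: "0 < D + B" using B assms(10) by simp
  have "ln (2 * R / \<delta> + 1) \<le> ln (1 + R) + ln (1 + 16 * (D + B)) + ln (1 + ?Lip) + 1 / \<epsilon>"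
    unfolding \<delta>_def using ln_grid_size_le[OF assms(8,11) DB Lip] .
  also have "\<dots> \<le> (1 + \<bar>ln R\<bar>) + (ln (1 + 16 * ?c3) + D + lam * ?P + K powr lam)
      + (1 + ?P + r + ?P * (1 + \<bar>ln R\<bar> + ?P)) + 1 / \<epsilon>"
    using ln_one_plus_le_abs_ln[OF assms(8)] ln_one_plus_loss_scale_le[OF assms(3,4,9,10,7) P(2)]
      ln_one_plus_param_lipschitz_le[OF assms(6,5,8)] unfolding B_def by linarith
  finally have log_le: "ln 2 + ln (1 / \<rho>) + ?P * ln (2 * R / \<delta> + 1) \<le> ?c6 * ?Q"
    using assms(3-5,9-14) P(1) by (intro log_failure_le_monomial) (auto simp: ge_one_powr_ge_zero)
  have "?c6 * ?Q * (2 * (D + B) ^ 4) \<le> real m * \<epsilon>\<^sup>2"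
  proof -
    have "0 \<le> ?c6 * ?Q"
      using assms(3-5,10,11,13,14) P(1) by (intro mult_nonneg_nonneg add_nonneg_nonneg) auto
    then have "?c6 * ?Q * (2 * (D + B) ^ 4) \<le> ?c6 * ?Q * (2 * (?c3 ^ 4 * D ^ 4 * ?P ^ ?q * K powr (4 * lam)))"
      using loss_scale_pow4_le[OF assms(3,4,9,10,7) P(2)] unfolding B_def by (intro mult_left_mono) auto
    also have "\<dots> = K powr (5 * lam) * sample_size_poly c2 lam r (1 / \<epsilon>) ?P (ln R) (ln (1 / \<rho>)) D * \<epsilon>\<^sup>2"
      using sample_size_poly_scaled[OF assms(11)] by simp
    also have "\<dots> \<le> real m * \<epsilon>\<^sup>2" using m by (intro mult_right_mono) auto
    finally show ?thesis .
  qed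
  then have "(ln 2 + ln (1 / \<rho>) + ?P * ln (2 * R / \<delta> + 1)) * (2 * (D + B) ^ 4) \<le> real m * \<epsilon>\<^sup>2"
    using order_trans[OF mult_right_mono[OF log_le]] DB by simp
  then have "ln (2 / \<rho>) + ?P * ln (2 * R / \<delta> + 1) \<le> real m * \<epsilon>\<^sup>2 / (2 * (D + B) ^ 4)"
    using DB assms(13) by (simp add: pos_le_divide_eq ln_div)
  moreover have "0 < 2 * R / \<delta> + 1" using DB Lip assms(8,11) unfolding \<delta>_def by (simp add: add_pos_nonneg)
  ultimately have "2 * (2 * R / \<delta> + 1) ^ param_count a * exp (- (real m * \<epsilon>\<^sup>2 / (2 * (D + B) ^ 4))) \<le> \<rho>"
    using assms(13) by (intro two_mult_exp_le)
  then show "2 * (2 * R / \<delta> + 1) ^ param_count a * exp (- real m * \<epsilon>\<^sup>2 / (2 * (D + B) ^ 4)) \<le> \<rho>"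
    by (simp only: minus_divide_left mult_minus_left)
qed

theorem proposition3p7:
  fixes T u v c1 c2 lam :: real
    and M :: "nat \<Rightarrow> 'w measure"
    and X Y :: "nat \<Rightarrow> 'w \<Rightarrow> nat \<Rightarrow> real"
    and xs ys :: "nat \<Rightarrow> nat \<Rightarrow> 'w \<Rightarrow> nat \<Rightarrow> real"
    and \<phi> :: "nat \<Rightarrow> (nat \<Rightarrow> real) \<Rightarrow> real"
  assumes "0 < T" and "u < v"
    and prob: "\<And>d. prob_space (M d)"
    and X_meas: "\<And>d. X d \<in> measurable (M d) (vec_space d)"
    and Y_meas: "\<And>d. Y d \<in> measurable (M d) (vec_space d)"
    and X_unif: "\<And>d. d \<ge> 1 \<Longrightarrow> distr (M d) (vec_space d) (X d) = unif_cube u v d"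
    and sample_meas: "\<And>d i. (\<lambda>\<omega>. (xs d i \<omega>, ys d i \<omega>))
                        \<in> measurable (M d) (vec_space d \<Otimes>\<^sub>M vec_space d)"
    and sample_indep: "\<And>d. prob_space.indep_vars (M d) (\<lambda>_. vec_space d \<Otimes>\<^sub>M vec_space d)
                          (\<lambda>i \<omega>. (xs d i \<omega>, ys d i \<omega>)) UNIV"
    and sample_distr: "\<And>d i. distr (M d) (vec_space d \<Otimes>\<^sub>M vec_space d) (\<lambda>\<omega>. (xs d i \<omega>, ys d i \<omega>))
                          = distr (M d) (vec_space d \<Otimes>\<^sub>M vec_space d) (\<lambda>\<omega>. (X d \<omega>, Y d \<omega>))"
    and phi_meas: "\<And>d. \<phi> d \<in> borel_measurable (vec_space d)"
    and c1: "0 < c1"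
    and cond_i: "\<And>d t i. d \<ge> 1 \<Longrightarrow> t \<ge> 1 \<Longrightarrow> i < d \<Longrightarrow>
                   measure (M d) {\<omega> \<in> space (M d). \<bar>Y d \<omega> i\<bar> \<ge> t} \<le> 2 * exp (- c1 * (ln t)\<^sup>2)"
    and c2: "0 < c2" and lam_ge: "2 \<le> lam"
    and cond_ii: "\<And>d y. d \<ge> 1 \<Longrightarrow> \<bar>\<phi> d y\<bar> \<le> c2 * (1 + norm2 d y powr lam)"
  shows "\<exists>h2. poly5 h2 \<and>
    (\<forall>d a R K D \<epsilon> \<rho> m. d \<ge> 1 \<longrightarrow> is_arch d a \<longrightarrow> 0 < R \<longrightarrow> 1 \<le> K \<longrightarrow> 1 \<le> D \<longrightarrow>
       0 < \<epsilon> \<longrightarrow> \<epsilon> < 1 \<longrightarrow> 0 < \<rho> \<longrightarrow> \<rho> < 1 \<longrightarrow>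
       real m \<ge> K powr (5 * lam) * h2 (1 / \<epsilon>) (real (param_count a)) (ln R) (ln (1 / \<rho>)) D \<longrightarrow>
       measure (M d) {\<omega> \<in> space (M d). \<forall>f \<in> NN_class u v a R D.
          \<bar>(\<integral>\<omega>'. (f (X d \<omega>') - trunc d K (\<phi> d) (Y d \<omega>'))\<^sup>2 \<partial>M d)
           - (1 / real m) * (\<Sum>i\<in>{1..m}. (f (xs d i \<omega>) - trunc d K (\<phi> d) (ys d i \<omega>))\<^sup>2)\<bar> \<le> \<epsilon>}
       \<ge> 1 - \<rho>)"
proof -
  define r where "r = max \<bar>u\<bar> \<bar>v\<bar>"
  have nonneg: "0 \<le> c2" "0 \<le> lam" "0 \<le> r" using c2 lam_ge by (simp_all add: r_def)
  have fixed: "1 - \<rho> \<le> measure (M d) {\<omega> \<in> space (M d). \<forall>f \<in> NN_class u v a R D.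
      generalization_gap (M d) (X d) (Y d) (xs d) (ys d) m (trunc d K (\<phi> d)) f \<omega> \<le> \<epsilon>}"
    if d: "1 \<le> d" and arch: "is_arch d a" and R: "0 < R" and K: "1 \<le> K" and D: "1 \<le> D"
      and \<epsilon>: "0 < \<epsilon>" "\<epsilon> < 1" and \<rho>: "0 < \<rho>" "\<rho> < 1"
      and m: "K powr (5 * lam) * sample_size_poly c2 lam r (1 / \<epsilon>) (real (param_count a)) (ln R) (ln (1 / \<rho>)) D
        \<le> real m"
    for d a R K D \<epsilon> \<rho> m
  proof -
    note size = sample_size_sufficient[OF nonneg arch d R K D \<epsilon>(1) less_imp_le[OF \<epsilon>(2)] \<rho> m]
    show ?thesis
      using nonneg D
      by (intro NN_class_generalization_gap_prob_ge[OF prob X_meas Y_meas sample_meas sample_indep sample_distr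
          borel_measurable_trunc[OF d phi_meas] trunc_abs_le[OF d cond_ii[OF d] nonneg(1,2)] _ arch R _ \<epsilon>(1)
          size(1) size(2)[unfolded r_def]]) auto
  qed
  show ?thesis
    unfolding generalization_gap_def[symmetric] using poly5_sample_size_poly fixed by blast
qed

end
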